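(* Let $\alpha>0$, $\beta\geq 0$, $q\in(0,\pi/2)$, and $m\geq 0$. Then $$E_{\min}(q,m)\leq E_{\min}(q,0)<\sqrt{2}\,q.$$ If in addition $m>0$ and $m\beta<2\alpha\int_{\mathbb{R}}(1-|\mathbf{u}_q|^2)\,dx$, then $E_{\min}(q,m)<E_{\min}(q,0)$.
   Context: $\mathcal{E}(\mathbb{R})=\{u\in H^1_{\mathrm{loc}}(\mathbb{R};\mathbb{C}): u'\in L^2,\ 1-|u|^2\in L^2(\mathbb{R})\}$, $\mathcal{NE}(\mathbb{R})=\{u\in\mathcal{E}(\mathbb{R}):|u|>0\}$; each $u\in\mathcal{NE}(\mathbb{R})$ has a lifting $u=\rho e^{i\theta}$, $\rho=|u|$, $\theta\in H^1_{\mathrm{loc}}$ real, $\theta'\in L^2$. Let $G(s)=s(2-s)$, $p(u)=\frac12\int_{\mathbb{R}}G(|1-\rho|)\theta'\,dx$. Let $\mathcal{X}=\{(u,v)\in\mathcal{NE}(\mathbb{R})\times H^1(\mathbb{R}):|u|<2\}$ ($v$ real-valued), $\mathcal{X}_{q,m}=\{(u,v)\in\mathcal{X}:p(u)=q,\ \|v\|_{L^2}^2=m\}$. The energy is $E(u,v)=\int_{\mathbb{R}}\big(\tfrac12|u'|^2+\tfrac12(v')^2+\tfrac14(1-|u|^2)^2+\tfrac{\beta}{4}v^4-\tfrac{\alpha}{2}(1-|u|^2)v^2\big)dx$ and $E_{\min}(q,m)=\inf\{E(u,v):(u,v)\in\mathcal{X}_{q,m}\}$. For $q\in(0,\pi/2)$,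 $\mathbf{u}_q\in\mathcal{NE}(\mathbb{R})$ denotes the (known, unique up to translation and constant phase) scalar dark soliton: it satisfies $0<|\mathbf{u}_q|<1$, $p(\mathbf{u}_q)=q$ and $E(\mathbf{u}_q,0)=E_{\min}(q,0)$, and it solves $icu'+u''+(1-|u|^2)u=0$ for some $c=c(q)\in(0,\sqrt2)$. *)

theory Defs
  imports "HOL-Analysis.Analysis"
begin

text \<open>Functions on the real line are identified with their continuous representatives.\<close>

definition has_weak_deriv :: "(real \<Rightarrow> 'a::{banach,second_countable_topology}) \<Rightarrow> (real \<Rightarrow> 'a) \<Rightarrow> bool" where
  "has_weak_deriv u g \<longleftrightarrow>
     (\<forall>a b. set_integrable lborel {a..b} g) \<and>
     (\<forall>a b. a \<le> b \<longrightarrow> u b - u a = (LINT t:{a..b}|lborel. g t))"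

definition L2 :: "(real \<Rightarrow> 'a::real_normed_vector) \<Rightarrow> bool" where
  "L2 f \<longleftrightarrow> f \<in> borel_measurable lborel \<and> integrable lborel (\<lambda>x. (norm (f x))^2)"

text \<open>The (a.e. unique) weak derivative, when it exists in L^2.\<close>
definition wderiv :: "(real \<Rightarrow> 'a::{banach,second_countable_topology}) \<Rightarrow> real \<Rightarrow> 'a" where
  "wderiv u = (SOME g. has_weak_deriv u g \<and> L2 g)"

definition in_E :: "(real \<Rightarrow> complex) \<Rightarrow> bool" where
  "in_E u \<longleftrightarrow> (\<exists>g. has_weak_deriv u g \<and> L2 g) \<and> L2 (\<lambda>x. 1 - (cmod (u x))^2)"

definition in_NE :: "(real \<Rightarrow> complex) \<Rightarrow> bool" where
  "in_NE u \<longleftrightarrow> in_E u \<and> (\<forall>x. cmod (u x) > 0)"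

definition is_lifting :: "(real \<Rightarrow> complex) \<Rightarrow> (real \<Rightarrow> real) \<Rightarrow> bool" where
  "is_lifting u \<theta> \<longleftrightarrow> (\<exists>g. has_weak_deriv \<theta> g \<and> L2 g) \<and>
     (\<forall>x. u x = complex_of_real (cmod (u x)) * cis (\<theta> x))"

text \<open>theta' for some lifting theta of u (independent of the choice a.e.).\<close>
definition lift_deriv :: "(real \<Rightarrow> complex) \<Rightarrow> real \<Rightarrow> real" where
  "lift_deriv u = (SOME g. \<exists>\<theta>. is_lifting u \<theta> \<and> has_weak_deriv \<theta> g \<and> L2 g)"

definition G :: "real \<Rightarrow> real" where
  "G s = s * (2 - s)"

definition momentum :: "(real \<Rightarrow> complex) \<Rightarrow> real" where
  "momentum u = (1/2) * (\<integral>x. G \<bar>1 - cmod (u x)\<bar> * lift_deriv u x \<partial>lborel)"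

definition in_H1 :: "(real \<Rightarrow> real) \<Rightarrow> bool" where
  "in_H1 v \<longleftrightarrow> L2 v \<and> (\<exists>g. has_weak_deriv v g \<and> L2 g)"

definition setX :: "((real \<Rightarrow> complex) \<times> (real \<Rightarrow> real)) set" where
  "setX = {(u, v). in_NE u \<and> in_H1 v \<and> (\<forall>x. cmod (u x) < 2)}"

definition setXqm :: "real \<Rightarrow> real \<Rightarrow> ((real \<Rightarrow> complex) \<times> (real \<Rightarrow> real)) set" where
  "setXqm q m = {(u, v) \<in> setX. momentum u = q \<and> (\<integral>x. (v x)^2 \<partial>lborel) = m}"

definition energy :: "real \<Rightarrow> real \<Rightarrow> (real \<Rightarrow> complex) \<Rightarrow> (real \<Rightarrow> real) \<Rightarrow> real" where
  "energy \<alpha> \<beta> u v = (\<integral>x. (cmod (wderiv u x))^2 / 2 + (wderiv v x)^2 / 2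
      + (1 - (cmod (u x))^2)^2 / 4 + \<beta> / 4 * (v x)^4
      - \<alpha> / 2 * (1 - (cmod (u x))^2) * (v x)^2 \<partial>lborel)"

text \<open>E_min as an infimum in the extended reals (empty set gives +infinity).\<close>
definition Emin :: "real \<Rightarrow> real \<Rightarrow> real \<Rightarrow> real \<Rightarrow> ereal" where
  "Emin \<alpha> \<beta> q m = (INF p \<in> setXqm q m. ereal (energy \<alpha> \<beta> (fst p) (snd p)))"

text \<open>Characterizing properties of the scalar dark soliton u_q (as given in the context).\<close>
definition is_dark_soliton :: "real \<Rightarrow> real \<Rightarrow> real \<Rightarrow> (real \<Rightarrow> complex) \<Rightarrow> bool" where
  "is_dark_soliton \<alpha> \<beta> q u \<longleftrightarrow>
     in_NE u \<and> (\<forall>x. 0 < cmod (u x) \<and> cmod (u x) < 1) \<and> momentum u = q \<and>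
     ereal (energy \<alpha> \<beta> u (\<lambda>_. 0)) = Emin \<alpha> \<beta> q 0 \<and>
     (\<exists>c u1 u2. 0 < c \<and> c < sqrt 2 \<and>
        (\<forall>x. (u has_vector_derivative u1 x) (at x)) \<and>
        (\<forall>x. (u1 has_vector_derivative u2 x) (at x)) \<and>
        (\<forall>x. \<i> * complex_of_real c * u1 x + u2 x + complex_of_real (1 - (cmod (u x))^2) * u x = 0))"

end

(*
  Both bounds come from explicit competitors.

  For E_min(q,0) < sqrt 2 q take u = rho e^(i theta), where rho descends linearly from 1 to 1 - e,
  stays at 1 - e on an interval of length L along which theta increases linearly by D, and climbs
  back to 1. Its momentum is e(2 - e) D / 2 and its energy is at most
  e^2 + a^2/2 + (1 - e)^2 D^2 / (2L) + L a^2 / 4, where a = e(2 - e). Choosing L to balance the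
  last two terms makes their sum sqrt 2 (1 - e) q, and for e = q/4 the first two terms stay below
  sqrt 2 e q.

  For the dependence on the mass, add to u a plateau v of mass m, equal to sqrt (m / C) on [-L, L]
  and supported in [-2L, 2L], where C is about L. Its gradient energy is O(m / L^2), its quartic
  energy O(m^2 / L), and by Young's inequality the coupling -alpha/2 int (1 - |u|^2) v^2 is
  O(L^(-1/2)); hence E_min(q,m) <= E(u,0) for every competitor u of E_min(q,0). For the dark
  soliton, 1 - |u_q|^2 > 0 and the change of energy is at most
  (m / C) (2/L + beta m / 4 - alpha/2 int_{-L}^{L} (1 - |u_q|^2)), which is negative for large L
  exactly when m beta < 2 alpha int (1 - |u_q|^2).
*)

theory Submission
  imports Defs
begin

section \<open>Weak derivatives\<close>

lemma eventually_in_symmetric_interval: "\<forall>\<^sub>F n in sequentially. (x::real) \<in> {- real n..real n}"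
proof -
  obtain n :: nat where "\<bar>x\<bar> \<le> real n" using real_arch_simple by blast
  then show ?thesis unfolding eventually_sequentially by (intro exI[of _ n]) auto
qed

lemma indicator_symmetric_interval_tendsto:
  fixes f :: "real \<Rightarrow> 'a::real_normed_vector"
  shows "(\<lambda>n. indicator {- real n..real n} x *\<^sub>R f x) \<longlonglongrightarrow> f (x::real)"
  by (rule tendsto_eventually, rule eventually_mono[OF eventually_in_symmetric_interval[of x]]) simp

lemma borel_measurable_if_set_integrable_intervals:
  fixes h :: "real \<Rightarrow> 'a::{banach,second_countable_topology}"
  assumes "\<And>a b. set_integrable lborel {a..b} h"
  shows "h \<in> borel_measurable borel"
proof (rule borel_measurable_LIMSEQ_metric[OF _ indicator_symmetric_interval_tendsto])
  show "(\<lambda>x. indicator {- real n..real n} x *\<^sub>R h x) \<in> borel_measurable borel" for n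
    using borel_measurable_integrable assms[of "- real n" "real n"]
    unfolding set_integrable_def by simp
qed

lemma integral_symmetric_intervals_tendsto:
  fixes w :: "real \<Rightarrow> real"
  assumes "integrable lborel w"
  shows "(\<lambda>n. \<integral>x. indicator {- real n..real n} x * w x \<partial>lborel) \<longlonglongrightarrow> (\<integral>x. w x \<partial>lborel)"
  using assms indicator_symmetric_interval_tendsto[where f = w]
  by (intro integral_dominated_convergence[where w = "\<lambda>x. \<bar>w x\<bar>"]) (auto simp: indicator_def)

lemma density_lborel_eq_if_Icc_eq:
  fixes f g :: "real \<Rightarrow> ennreal"
  assumes [measurable]: "f \<in> borel_measurable borel" "g \<in> borel_measurable borel"
    and eq: "\<And>a b. emeasure (density lborel f) {a..b} = emeasure (density lborel g) {a..b}"
    and finite: "\<And>a b. emeasure (density lborel f) {a..b} \<noteq> \<infinity>"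
  shows "density lborel f = density lborel g"
proof (rule measure_eqI_generator_eq[where E = "range (\<lambda>(a, b). {a..b::real})" and \<Omega> = UNIV
      and A = "\<lambda>n. {- real n..real n}"])
  show "Int_stable (range (\<lambda>(a, b). {a..b::real}))"
    unfolding Int_stable_def
    by (auto simp: Int_atLeastAtMost intro!: image_eqI[where x="(max _ _, min _ _)"])
  have "sets (density lborel h) = sigma_sets UNIV (range (\<lambda>(a, b). {a..b::real}))" for h
    by (simp add: borel_eq_atLeastAtMost)
  then show "sets (density lborel f) = sigma_sets UNIV (range (\<lambda>(a, b). {a..b::real}))"
    and "sets (density lborel g) = sigma_sets UNIV (range (\<lambda>(a, b). {a..b::real}))" by this+
  show "(\<Union>n. {- real n..real n}) = (UNIV :: real set)"
  proof (intro set_eqI iffI UNIV_I)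
    fix x :: real
    obtain n :: nat where "\<bar>x\<bar> \<le> real n" using real_arch_simple by blast
    then show "x \<in> (\<Union>n. {- real n..real n})" by (auto intro!: exI[of _ n])
  qed
qed (use eq finite in auto)

lemma AE_zero_if_interval_integrals_zero:
  fixes h :: "real \<Rightarrow> real"
  assumes int: "\<And>a b. set_integrable lborel {a..b} h"
    and zero: "\<And>a b. a \<le> b \<Longrightarrow> (LINT x:{a..b}|lborel. h x) = 0"
  shows "AE x in lborel. h x = 0"
proof -
  have [measurable]: "h \<in> borel_measurable borel"
    by (rule borel_measurable_if_set_integrable_intervals[OF int])
  define P N where "P x = max 0 (h x)" and "N x = max 0 (- h x)" for x
  have [measurable]: "P \<in> borel_measurable borel" "N \<in> borel_measurable borel"
    unfolding P_def[abs_def] N_def[abs_def] by measurable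
  have int_PN: "set_integrable lborel {a..b} P \<and> set_integrable lborel {a..b} N" for a b
  proof -
    note abs_int = integrable_abs[OF int[of a b, unfolded set_integrable_def]]
    show ?thesis
      unfolding set_integrable_def
      by (intro conjI Bochner_Integration.integrable_bound[OF abs_int]) (auto simp: P_def N_def indicator_def)
  qed
  have density_Icc: "emeasure (density lborel f) {a..b} = ennreal (LINT x:{a..b}|lborel. f x)"
    if "f \<in> {P, N}" for f a b
  proof -
    have "emeasure (density lborel f) {a..b} = (\<integral>\<^sup>+x. ennreal (indicator {a..b} x * f x) \<partial>lborel)"
      using that by (subst emeasure_density) (auto intro!: nn_integral_cong simp: indicator_def)
    also have "\<dots> = ennreal (LINT x:{a..b}|lborel. f x)"
      using that int_PN unfolding set_lebesgue_integral_def set_integrable_def real_scaleR_def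
      by (intro nn_integral_eq_integral) (auto simp: P_def N_def)
    finally show ?thesis .
  qed
  have PN_diff: "P x - N x = h x" for x
    by (simp add: P_def N_def max_def)
  have "density lborel P = density lborel N"
  proof (rule density_lborel_eq_if_Icc_eq)
    show "emeasure (density lborel P) {a..b} = emeasure (density lborel N) {a..b}" for a b
    proof (cases "a \<le> b")
      case True
      have "(LINT x:{a..b}|lborel. P x) - (LINT x:{a..b}|lborel. N x) = (LINT x:{a..b}|lborel. h x)"
        using int_PN by (subst set_integral_diff(2)[symmetric]) (auto simp: PN_diff)
      with zero[OF True] show ?thesis by (simp add: density_Icc)
    qed simp
    show "emeasure (density lborel P) {a..b} \<noteq> \<infinity>" for a b
      by (simp add: density_Icc)
  qed measurable
  then have "AE x in lborel. ennreal (P x) = ennreal (N x)"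
    by (intro sigma_finite_measure.density_unique[OF sigma_finite_lborel]) auto
  then show ?thesis
    by eventually_elim (auto simp: P_def N_def max_def split: if_splits)
qed

lemma has_weak_deriv_inner_left:
  fixes u g :: "real \<Rightarrow> 'a::euclidean_space"
  assumes "has_weak_deriv u g"
  shows "has_weak_deriv (\<lambda>x. u x \<bullet> b) (\<lambda>x. g x \<bullet> b)"
  unfolding has_weak_deriv_def
proof (intro conjI allI impI)
  fix a c :: real
  have int: "integrable lborel (\<lambda>x. indicator {a..c} x *\<^sub>R g x)"
    using assms unfolding has_weak_deriv_def set_integrable_def by auto
  then have "integrable lborel (\<lambda>x. (indicator {a..c} x *\<^sub>R g x) \<bullet> b)"
    by (rule integrable_inner_left)
  then show "set_integrable lborel {a..c} (\<lambda>x. g x \<bullet> b)"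
    unfolding set_integrable_def by simp
  assume "a \<le> c"
  then have "u c - u a = (LINT x:{a..c}|lborel. g x)"
    using assms unfolding has_weak_deriv_def by simp
  then have "u c \<bullet> b - u a \<bullet> b = (LINT x:{a..c}|lborel. g x) \<bullet> b"
    by (simp flip: inner_diff_left)
  also have "\<dots> = (\<integral>x. (indicator {a..c} x *\<^sub>R g x) \<bullet> b \<partial>lborel)"
    unfolding set_lebesgue_integral_def by (rule integral_inner_left[symmetric]) (rule int)
  also have "\<dots> = (LINT x:{a..c}|lborel. g x \<bullet> b)"
    unfolding set_lebesgue_integral_def by simp
  finally show "u c \<bullet> b - u a \<bullet> b = (LINT x:{a..c}|lborel. g x \<bullet> b)" .
qed

lemma has_weak_deriv_AE_unique:
  fixes u1 u2 g1 g2 :: "real \<Rightarrow> 'a::euclidean_space"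
  assumes g1: "has_weak_deriv u1 g1" and g2: "has_weak_deriv u2 g2"
    and const: "\<And>x. u1 x - u2 x = c"
  shows "AE x in lborel. g1 x = g2 x"
proof -
  have "AE x in lborel. g1 x \<bullet> b - g2 x \<bullet> b = 0" for b
  proof (rule AE_zero_if_interval_integrals_zero)
    note h1 = has_weak_deriv_inner_left[OF g1, of b, unfolded has_weak_deriv_def]
    note h2 = has_weak_deriv_inner_left[OF g2, of b, unfolded has_weak_deriv_def]
    show "set_integrable lborel {a..a'} (\<lambda>x. g1 x \<bullet> b - g2 x \<bullet> b)" for a a'
      using h1 h2 by auto
    show "(LINT x:{a..a'}|lborel. g1 x \<bullet> b - g2 x \<bullet> b) = 0" if "a \<le> a'" for a a'
    proof -
      have "(LINT x:{a..a'}|lborel. g1 x \<bullet> b - g2 x \<bullet> b)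
          = (u1 a' \<bullet> b - u1 a \<bullet> b) - (u2 a' \<bullet> b - u2 a \<bullet> b)"
        using h1 h2 that by (simp add: set_integral_diff)
      also have "\<dots> = (u1 a' - u2 a') \<bullet> b - (u1 a - u2 a) \<bullet> b"
        by (simp add: inner_diff_left)
      finally show ?thesis by (simp add: const)
    qed
  qed
  then have "AE x in lborel. \<forall>b\<in>Basis. g1 x \<bullet> b = g2 x \<bullet> b"
    by (intro eventually_ball_finite) auto
  then show ?thesis
    by eventually_elim (simp add: euclidean_eq_iff[of "g1 _"])
qed

lemma has_weak_deriv_continuous_on:
  fixes u g :: "real \<Rightarrow> 'a::euclidean_space"
  assumes "has_weak_deriv u g"
  shows "continuous_on S u"
proof (intro continuous_at_imp_continuous_on ballI)
  fix x :: real
  let ?I = "{x - 1..x + 1}"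
  have g_int: "set_integrable lborel {a..b} g" for a b
    using assms unfolding has_weak_deriv_def by auto
  have "continuous_on ?I (\<lambda>y. u (x - 1) + integral {x - 1..y} g)"
    using set_borel_integral_eq_integral(1)[OF g_int]
    by (intro continuous_intros indefinite_integral_continuous_1)
  moreover have "u y = u (x - 1) + integral {x - 1..y} g" if "y \<in> ?I" for y
    using assms that set_borel_integral_eq_integral(2)[OF g_int]
    unfolding has_weak_deriv_def by (simp add: algebra_simps)
  ultimately have "continuous_on ?I u"
    using continuous_on_cong by (metis (no_types, lifting))
  then show "isCont u x"
    by (rule continuous_on_interior) auto
qed

lemma has_weak_deriv_if_differentiable_off_finite:
  fixes u g :: "real \<Rightarrow> 'a::euclidean_space"
  assumes S: "finite S" and cont: "continuous_on UNIV u"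
    and deriv: "\<And>x. x \<notin> S \<Longrightarrow> (u has_vector_derivative g x) (at x)"
    and g_meas: "g \<in> borel_measurable borel" and bound: "\<And>x. norm (g x) \<le> B"
  shows "has_weak_deriv u g"
  unfolding has_weak_deriv_def
proof (intro conjI allI impI)
  fix a b :: real
  have B_int: "integrable lborel (\<lambda>x. indicator {a..b} x * B)"
    by (simp add: emeasure_lborel_Icc_eq)
  have B0: "0 \<le> B"
    using norm_ge_zero bound order_trans by blast
  show g_int: "set_integrable lborel {a..b} g"
    unfolding set_integrable_def
    by (rule Bochner_Integration.integrable_bound[OF B_int]) (use B0 bound g_meas in \<open>auto simp: indicator_def\<close>)
  assume "a \<le> b"
  then have "(g has_integral (u b - u a)) {a..b}"
    using deriv continuous_on_subset[OF cont]
    by (intro fundamental_theorem_of_calculus_interior_strong[OF S]) auto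
  then show "u b - u a = (LINT t:{a..b}|lborel. g t)"
    using set_borel_integral_eq_integral(2)[OF g_int] by (simp add: integral_unique)
qed

lemma has_weak_deriv_const: "has_weak_deriv (\<lambda>_. c) (\<lambda>_. 0)"
  by (simp add: has_weak_deriv_def set_integrable_def)

lemma has_weak_deriv_scaleR:
  assumes "has_weak_deriv u g"
  shows "has_weak_deriv (\<lambda>x. c *\<^sub>R u x) (\<lambda>x. c *\<^sub>R g x)"
  using assms unfolding has_weak_deriv_def by (simp add: scaleR_diff_right[symmetric])

lemma integrable_indicator_Icc: "integrable lborel (indicator {a..b::real} :: real \<Rightarrow> real)"
  by (simp add: emeasure_lborel_Icc_eq)

lemma L2_if_bounded_support:
  fixes f :: "real \<Rightarrow> 'a::real_normed_vector"
  assumes meas: "f \<in> borel_measurable borel" and bound: "\<And>x. norm (f x) \<le> B * indicator {a..b} x"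
  shows "L2 f"
  unfolding L2_def
proof
  show "f \<in> borel_measurable lborel" using meas by simp
  have "integrable lborel (\<lambda>x. indicator {a..b} x * B^2)"
    by (simp add: emeasure_lborel_Icc_eq)
  then show "integrable lborel (\<lambda>x. (norm (f x))^2)"
  proof (rule Bochner_Integration.integrable_bound)
    show "AE x in lborel. norm ((norm (f x))^2) \<le> norm (indicator {a..b} x * B^2)"
    proof (rule AE_I2)
      fix x
      have "(norm (f x))^2 \<le> (B * indicator {a..b} x)^2"
        using bound[of x] by (intro power_mono) auto
      then show "norm ((norm (f x))^2) \<le> norm (indicator {a..b} x * B^2)"
        by (auto simp: indicator_def power_mult_distrib)
    qed
  qed (use meas in measurable)
qed

lemma L2_zero: "L2 (\<lambda>_. 0)"
  by (simp add: L2_def)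

lemma wderiv_spec:
  assumes "has_weak_deriv u g" and "L2 g"
  shows "has_weak_deriv u (wderiv u)" and "L2 (wderiv u)"
proof -
  have "has_weak_deriv u (wderiv u) \<and> L2 (wderiv u)"
    unfolding wderiv_def by (rule someI[of _ g]) (use assms in auto)
  then show "has_weak_deriv u (wderiv u)" and "L2 (wderiv u)" by auto
qed

lemma wderiv_AE_eq:
  fixes u g :: "real \<Rightarrow> 'a::euclidean_space"
  assumes "has_weak_deriv u g" and "L2 g"
  shows "AE x in lborel. wderiv u x = g x"
  by (rule has_weak_deriv_AE_unique[OF wderiv_spec(1)[OF assms] assms(1), of 0]) simp

section \<open>Liftings and momentum\<close>

lemma cis_eq_imp_diff_constant:
  fixes \<theta>1 \<theta>2 :: "real \<Rightarrow> real"
  assumes cont: "continuous_on UNIV \<theta>1" "continuous_on UNIV \<theta>2"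
    and eq: "\<And>x. cis (\<theta>1 x) = cis (\<theta>2 x)"
  obtains c where "\<And>x. \<theta>1 x - \<theta>2 x = c"
proof -
  define d where "d x = \<theta>1 x - \<theta>2 x" for x
  have multiple: "\<exists>k::int. d x = 2 * pi * k" for x
  proof -
    have "sin (\<theta>1 x) = sin (\<theta>2 x) \<and> cos (\<theta>1 x) = cos (\<theta>2 x)"
      using eq[of x] by (metis cis.sel(1) cis.sel(2))
    then obtain k :: int where "\<theta>1 x = \<theta>2 x + 2 * pi * k"
      using sin_cos_eq_iff by blast
    then show ?thesis unfolding d_def by auto
  qed
  have "d constant_on UNIV"
  proof (rule continuous_discrete_range_constant)
    show "continuous_on UNIV d" unfolding d_def by (intro continuous_intros cont)
    show "\<exists>e>0. \<forall>y. y \<in> UNIV \<and> d y \<noteq> d x \<longrightarrow> e \<le> norm (d y - d x)" for x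
    proof (intro exI[of _ "2 * pi"] conjI allI impI)
      fix y
      obtain k j :: int where k: "d x = 2 * pi * k" and j: "d y = 2 * pi * j"
        using multiple by meson
      assume "y \<in> UNIV \<and> d y \<noteq> d x"
      then have "1 \<le> \<bar>j - k\<bar>" using j k by auto
      then have "1 \<le> \<bar>real_of_int j - real_of_int k\<bar>"
        by (metis of_int_1_le_iff of_int_abs of_int_diff)
      then have "2 * pi * 1 \<le> 2 * pi * \<bar>real_of_int j - real_of_int k\<bar>"
        by (intro mult_left_mono) auto
      then show "2 * pi \<le> norm (d y - d x)"
        unfolding j k by (simp add: abs_mult right_diff_distrib[symmetric])
    qed simp
  qed simp
  then show ?thesis using that unfolding constant_on_def d_def by blast
qed

lemma lift_deriv_AE_eq:
  assumes lift: "is_lifting u \<theta>" and \<theta>': "has_weak_deriv \<theta> g" "L2 g"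
    and nonzero: "\<And>x. u x \<noteq> 0"
  shows "L2 (lift_deriv u)" and "AE x in lborel. lift_deriv u x = g x"
proof -
  have "\<exists>\<theta>1. is_lifting u \<theta>1 \<and> has_weak_deriv \<theta>1 (lift_deriv u) \<and> L2 (lift_deriv u)"
    unfolding lift_deriv_def by (rule someI[of _ g]) (use assms in blast)
  then obtain \<theta>1 where lift1: "is_lifting u \<theta>1" and \<theta>1': "has_weak_deriv \<theta>1 (lift_deriv u)"
    and "L2 (lift_deriv u)" by blast
  then show "L2 (lift_deriv u)" by blast
  have "cis (\<theta>1 x) = cis (\<theta> x)" for x
  proof -
    have "complex_of_real (cmod (u x)) * cis (\<theta>1 x) = complex_of_real (cmod (u x)) * cis (\<theta> x)"
      using lift lift1 unfolding is_lifting_def by metis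
    then show ?thesis using nonzero[of x] by simp
  qed
  moreover have "continuous_on UNIV \<theta>1" "continuous_on UNIV \<theta>"
    using has_weak_deriv_continuous_on \<theta>1' \<theta>'(1) by blast+
  \<comment> \<open>Whichever lifting \<open>lift_deriv\<close> picked, it differs from \<open>\<theta>\<close> by a constant.\<close>
  ultimately obtain c where "\<And>x. \<theta>1 x - \<theta> x = c"
    using cis_eq_imp_diff_constant by metis
  then show "AE x in lborel. lift_deriv u x = g x"
    by (rule has_weak_deriv_AE_unique[OF \<theta>1' \<theta>'(1)])
qed

lemma momentum_eq_lifting_integral:
  assumes "is_lifting u \<theta>" "has_weak_deriv \<theta> g" "L2 g" "\<And>x. u x \<noteq> 0"
    and [measurable]: "u \<in> borel_measurable borel"
  shows "momentum u = (1/2) * (\<integral>x. G \<bar>1 - cmod (u x)\<bar> * g x \<partial>lborel)"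
proof -
  have [measurable]: "lift_deriv u \<in> borel_measurable borel" "g \<in> borel_measurable borel"
    using lift_deriv_AE_eq(1)[OF assms(1-4)] assms(3) unfolding L2_def by auto
  have "(\<integral>x. G \<bar>1 - cmod (u x)\<bar> * lift_deriv u x \<partial>lborel) = (\<integral>x. G \<bar>1 - cmod (u x)\<bar> * g x \<partial>lborel)"
    using lift_deriv_AE_eq(2)[OF assms(1-4)]
    by (intro integral_cong_AE) (auto simp: G_def)
  then show ?thesis unfolding momentum_def by simp
qed

section \<open>The energy\<close>

lemma in_E_wderiv:
  assumes "in_E u"
  shows "has_weak_deriv u (wderiv u)" and "L2 (wderiv u)"
  using assms wderiv_spec unfolding in_E_def by blast+

lemma in_E_borel_measurable:
  assumes "in_E u"
  shows "u \<in> borel_measurable borel"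
  using has_weak_deriv_continuous_on[OF in_E_wderiv(1)[OF assms]] by (rule borel_measurable_continuous_onI)

lemma in_H1_wderiv:
  assumes "in_H1 v"
  shows "has_weak_deriv v (wderiv v)" and "L2 (wderiv v)"
  using assms wderiv_spec unfolding in_H1_def by blast+

lemma in_H1_zero: "in_H1 (\<lambda>_. 0)"
  unfolding in_H1_def using has_weak_deriv_const L2_zero by blast

lemma in_H1_eq_0_if_mass_0:
  assumes "in_H1 v" and "(\<integral>x. (v x)\<^sup>2 \<partial>lborel) = 0"
  shows "v = (\<lambda>_. 0)"
proof -
  have cont: "continuous_on UNIV v"
    using has_weak_deriv_continuous_on[OF in_H1_wderiv(1)[OF assms(1)]] .
  have int: "integrable lborel (\<lambda>x. (v x)\<^sup>2)"
    using assms(1) unfolding in_H1_def L2_def by simp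
  have "AE x in lborel. (v x)\<^sup>2 = 0"
    using integral_nonneg_eq_0_iff_AE[OF int] assms(2) by simp
  then have "AE x in lebesgue. x \<in> {x. v x = 0}"
    by (intro AE_completion) simp
  moreover have "closed {x. v x = 0}"
    using closed_Collect_eq[OF cont continuous_on_const] by simp
  ultimately show ?thesis
    using mem_closed_if_AE_lebesgue by blast
qed

lemma wderiv_zero_AE: "AE x in lborel. wderiv (\<lambda>_::real. 0::real) x = 0"
  by (rule wderiv_AE_eq[OF has_weak_deriv_const L2_zero])

lemma abs_mult_le_weighted_squares:
  fixes a b t :: real
  assumes "0 < t"
  shows "\<bar>a * b\<bar> \<le> (t * a\<^sup>2 + b\<^sup>2 / t) / 2"
proof -
  have "0 \<le> (t * \<bar>a\<bar> - \<bar>b\<bar>)\<^sup>2 / t" using assms by simp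
  also have "\<dots> = t * a\<^sup>2 - 2 * \<bar>a * b\<bar> + b\<^sup>2 / t"
    using assms by (simp add: power2_eq_square field_simps abs_mult)
  finally show ?thesis by simp
qed

lemma integrable_mult_square:
  fixes w v :: "real \<Rightarrow> real"
  assumes "integrable lborel (\<lambda>x. (w x)\<^sup>2)" and "integrable lborel (\<lambda>x. v x ^ 4)"
    and [measurable]: "w \<in> borel_measurable borel" "v \<in> borel_measurable borel"
  shows "integrable lborel (\<lambda>x. w x * (v x)\<^sup>2)"
proof (rule Bochner_Integration.integrable_bound)
  show "integrable lborel (\<lambda>x. ((w x)\<^sup>2 + v x ^ 4) / 2)"
    using assms(1,2) by simp
  show "AE x in lborel. norm (w x * (v x)\<^sup>2) \<le> norm (((w x)\<^sup>2 + v x ^ 4) / 2)"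
    using abs_mult_le_weighted_squares[of 1 "w _" "(v _)\<^sup>2"] by (simp add: power_even_eq)
qed measurable

lemma abs_integral_mult_square_le:
  fixes w v :: "real \<Rightarrow> real"
  assumes "integrable lborel (\<lambda>x. (w x)\<^sup>2)" and "integrable lborel (\<lambda>x. v x ^ 4)"
    and "w \<in> borel_measurable borel" "v \<in> borel_measurable borel" and "0 < t"
  shows "\<bar>\<integral>x. w x * (v x)\<^sup>2 \<partial>lborel\<bar>
    \<le> (t * (\<integral>x. (w x)\<^sup>2 \<partial>lborel) + (\<integral>x. v x ^ 4 \<partial>lborel) / t) / 2"
proof -
  have "\<bar>\<integral>x. w x * (v x)\<^sup>2 \<partial>lborel\<bar> \<le> (\<integral>x. \<bar>w x * (v x)\<^sup>2\<bar> \<partial>lborel)"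
    by (rule integral_abs_bound)
  also have "\<dots> \<le> (\<integral>x. (t * (w x)\<^sup>2 + v x ^ 4 / t) / 2 \<partial>lborel)"
  proof (rule integral_mono)
    show "\<bar>w x * (v x)\<^sup>2\<bar> \<le> (t * (w x)\<^sup>2 + v x ^ 4 / t) / 2" for x
      using abs_mult_le_weighted_squares[OF assms(5), of "w x" "(v x)\<^sup>2"] by (simp flip: power_mult)
  qed (use integrable_mult_square[OF assms(1-4)] assms(1,2) in auto)
  also have "\<dots> = (t * (\<integral>x. (w x)\<^sup>2 \<partial>lborel) + (\<integral>x. v x ^ 4 \<partial>lborel) / t) / 2"
    using assms(1,2) by simp
  finally show ?thesis .
qed

lemma energy_zero_field:
  assumes "in_E u"
  shows "energy \<alpha> \<beta> u (\<lambda>_. 0)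
    = (\<integral>x. (cmod (wderiv u x))\<^sup>2 / 2 + (1 - (cmod (u x))\<^sup>2)\<^sup>2 / 4 \<partial>lborel)"
proof -
  have [measurable]: "u \<in> borel_measurable borel" "wderiv u \<in> borel_measurable borel"
    using in_E_borel_measurable[OF assms] in_E_wderiv(2)[OF assms] unfolding L2_def by auto
  have [measurable]: "wderiv (\<lambda>_::real. 0::real) \<in> borel_measurable borel"
    using wderiv_spec(2)[OF has_weak_deriv_const[where c = "0::real"] L2_zero] unfolding L2_def by simp
  show ?thesis
    unfolding energy_def using wderiv_zero_AE by (intro integral_cong_AE) auto
qed

lemma energy_add_field:
  assumes u: "in_E u" and v: "in_H1 v" and v4: "integrable lborel (\<lambda>x. v x ^ 4)"
  shows "energy \<alpha> \<beta> u v = energy \<alpha> \<beta> u (\<lambda>_. 0) + (\<integral>x. (wderiv v x)\<^sup>2 \<partial>lborel) / 2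
    + \<beta> / 4 * (\<integral>x. v x ^ 4 \<partial>lborel) - \<alpha> / 2 * (\<integral>x. (1 - (cmod (u x))\<^sup>2) * (v x)\<^sup>2 \<partial>lborel)"
proof -
  define w where "w x = 1 - (cmod (u x))\<^sup>2" for x
  have [measurable]: "u \<in> borel_measurable borel" "wderiv u \<in> borel_measurable borel"
    "v \<in> borel_measurable borel" "wderiv v \<in> borel_measurable borel"
    using in_E_borel_measurable[OF u] in_E_wderiv(2)[OF u] in_H1_wderiv(2)[OF v] v
    unfolding L2_def in_H1_def by auto
  have [measurable]: "w \<in> borel_measurable borel" unfolding w_def[abs_def] by measurable
  have int_u: "integrable lborel (\<lambda>x. (cmod (wderiv u x))\<^sup>2 / 2 + (w x)\<^sup>2 / 4)"
    using in_E_wderiv(2)[OF u] u unfolding L2_def in_E_def w_def by auto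
  have int_v': "integrable lborel (\<lambda>x. (wderiv v x)\<^sup>2)"
    using in_H1_wderiv(2)[OF v] unfolding L2_def by simp
  have int_wv: "integrable lborel (\<lambda>x. w x * (v x)\<^sup>2)"
    using u v4 unfolding in_E_def L2_def w_def by (intro integrable_mult_square) auto
  have "energy \<alpha> \<beta> u v = (\<integral>x. ((cmod (wderiv u x))\<^sup>2 / 2 + (w x)\<^sup>2 / 4)
      + (((wderiv v x)\<^sup>2 / 2 + \<beta> / 4 * v x ^ 4) - \<alpha> / 2 * (w x * (v x)\<^sup>2)) \<partial>lborel)"
    unfolding energy_def w_def by (rule Bochner_Integration.integral_cong) (auto simp: algebra_simps)
  also have "\<dots> = (\<integral>x. (cmod (wderiv u x))\<^sup>2 / 2 + (w x)\<^sup>2 / 4 \<partial>lborel)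
      + ((\<integral>x. (wderiv v x)\<^sup>2 / 2 \<partial>lborel) + (\<integral>x. \<beta> / 4 * v x ^ 4 \<partial>lborel))
      - (\<integral>x. \<alpha> / 2 * (w x * (v x)\<^sup>2) \<partial>lborel)"
    using int_u int_v' v4 int_wv by simp
  finally show ?thesis
    unfolding energy_zero_field[OF u] w_def by simp
qed

lemma Emin_le_energy: "(u, v) \<in> setXqm q m \<Longrightarrow> Emin \<alpha> \<beta> q m \<le> ereal (energy \<alpha> \<beta> u v)"
  unfolding Emin_def by (rule INF_lower2) auto

section \<open>Ramps and polar profiles\<close>

definition ramp :: "real \<Rightarrow> real" where
  "ramp t = max 0 (min 1 t)"

definition ramp_deriv :: "real \<Rightarrow> real" where
  "ramp_deriv t = (if 0 < t \<and> t < 1 then 1 else 0)"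

lemma ramp_bounds: "0 \<le> ramp t" "ramp t \<le> 1"
  by (auto simp: ramp_def)

lemma ramp_eq_0: "t \<le> 0 \<Longrightarrow> ramp t = 0"
  and ramp_eq_1: "1 \<le> t \<Longrightarrow> ramp t = 1"
  and ramp_deriv_eq_0: "t \<le> 0 \<or> 1 \<le> t \<Longrightarrow> ramp_deriv t = 0"
  by (auto simp: ramp_def ramp_deriv_def)

lemma ramp_mono: "s \<le> t \<Longrightarrow> ramp s \<le> ramp t"
  by (auto simp: ramp_def)

lemma continuous_on_ramp [continuous_intros]:
  "continuous_on S f \<Longrightarrow> continuous_on S (\<lambda>x. ramp (f x))"
  unfolding ramp_def by (intro continuous_intros)

lemma borel_measurable_ramp [measurable]: "ramp \<in> borel_measurable borel"
  unfolding ramp_def[abs_def] by measurable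

lemma borel_measurable_ramp_deriv [measurable]: "ramp_deriv \<in> borel_measurable borel"
  unfolding ramp_deriv_def[abs_def] by measurable

lemma has_real_derivative_ramp:
  assumes "t \<noteq> 0" "t \<noteq> 1"
  shows "(ramp has_real_derivative ramp_deriv t) (at t)"
proof -
  consider "t < 0" | "0 < t" "t < 1" | "1 < t" using assms by linarith
  then show ?thesis
  proof cases
    case 1
    show ?thesis
      by (rule has_field_derivative_transform_within_open[of "\<lambda>_. 0" _ _ "{..<0}"])
         (use 1 in \<open>auto simp: ramp_def ramp_deriv_def\<close>)
  next
    case 2
    show ?thesis
      by (rule has_field_derivative_transform_within_open[of "\<lambda>x. x" _ _ "{0<..<1}"])
         (use 2 in \<open>auto simp: ramp_def ramp_deriv_def\<close>)
  next
    case 3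
    show ?thesis
      by (rule has_field_derivative_transform_within_open[of "\<lambda>_. 1" _ _ "{1<..}"])
         (use 3 in \<open>auto simp: ramp_def ramp_deriv_def\<close>)
  qed
qed

lemma has_real_derivative_ramp_comp:
  assumes "(h has_real_derivative h') (at x)" "h x \<noteq> 0" "h x \<noteq> 1"
  shows "((\<lambda>x. ramp (h x)) has_real_derivative ramp_deriv (h x) * h') (at x)"
  using DERIV_chain2[OF has_real_derivative_ramp[OF assms(2,3)] assms(1)] .

lemma borel_measurable_cis [measurable]: "cis \<in> borel_measurable borel"
  by (intro borel_measurable_continuous_onI continuous_intros)

locale polar_profile =
  fixes \<rho> \<theta> \<rho>' \<theta>' :: "real \<Rightarrow> real" and S :: "real set" and a b B :: real
  assumes finite_S: "finite S"
    and continuous_\<rho>: "continuous_on UNIV \<rho>" and continuous_\<theta>: "continuous_on UNIV \<theta>"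
    and \<rho>_deriv: "\<And>x. x \<notin> S \<Longrightarrow> (\<rho> has_real_derivative \<rho>' x) (at x)"
    and \<theta>_deriv: "\<And>x. x \<notin> S \<Longrightarrow> (\<theta> has_real_derivative \<theta>' x) (at x)"
    and measurable_\<rho>' [measurable]: "\<rho>' \<in> borel_measurable borel"
    and measurable_\<theta>' [measurable]: "\<theta>' \<in> borel_measurable borel"
    and \<rho>'_bound: "\<And>x. \<bar>\<rho>' x\<bar> \<le> B" and \<theta>'_bound: "\<And>x. \<bar>\<theta>' x\<bar> \<le> B"
    and outside: "\<And>x. x \<notin> {a..b} \<Longrightarrow> \<rho> x = 1 \<and> \<rho>' x = 0 \<and> \<theta>' x = 0"
    and \<rho>_range: "\<And>x. 0 < \<rho> x \<and> \<rho> x < 2"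
begin

abbreviation u :: "real \<Rightarrow> complex" where
  "u \<equiv> \<lambda>x. complex_of_real (\<rho> x) * cis (\<theta> x)"

abbreviation u' :: "real \<Rightarrow> complex" where
  "u' \<equiv> \<lambda>x. complex_of_real (\<rho>' x) * cis (\<theta> x)
    + complex_of_real (\<rho> x) * (\<i> * complex_of_real (\<theta>' x) * cis (\<theta> x))"

lemma norm_u: "cmod (u x) = \<rho> x"
  using \<rho>_range[of x] by (simp add: norm_mult)

lemma norm_u'_sq: "(cmod (u' x))\<^sup>2 = (\<rho>' x)\<^sup>2 + (\<rho> x)\<^sup>2 * (\<theta>' x)\<^sup>2"
proof -
  have "u' x = Complex (\<rho>' x) (\<rho> x * \<theta>' x) * cis (\<theta> x)"
    by (simp add: complex_eq_iff)
  then have "cmod (u' x) = cmod (Complex (\<rho>' x) (\<rho> x * \<theta>' x))"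
    by (simp only: norm_mult norm_cis mult_1_right)
  then show ?thesis by (simp add: cmod_def power_mult_distrib)
qed

lemma measurable_\<rho> [measurable]: "\<rho> \<in> borel_measurable borel"
  and measurable_\<theta> [measurable]: "\<theta> \<in> borel_measurable borel"
  using continuous_\<rho> continuous_\<theta> by (auto intro: borel_measurable_continuous_onI)

lemma has_weak_deriv_\<theta>: "has_weak_deriv \<theta> \<theta>'"
  using \<theta>_deriv \<theta>'_bound
  by (intro has_weak_deriv_if_differentiable_off_finite[OF finite_S continuous_\<theta> _ measurable_\<theta>'])
     (auto simp: has_real_derivative_iff_has_vector_derivative)

lemma norm_u'_le: "norm (u' x) \<le> 3 * B"
proof -
  have "norm (u' x) \<le> norm (complex_of_real (\<rho>' x) * cis (\<theta> x))
      + norm (complex_of_real (\<rho> x) * (\<i> * complex_of_real (\<theta>' x) * cis (\<theta> x)))"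
    by (rule norm_triangle_ineq)
  also have "\<dots> = \<bar>\<rho>' x\<bar> + \<bar>\<rho> x\<bar> * \<bar>\<theta>' x\<bar>"
    by (simp add: norm_mult)
  also have "\<dots> \<le> B + 2 * B"
    using \<rho>'_bound[of x] \<theta>'_bound[of x] \<rho>_range[of x] by (intro add_mono mult_mono) auto
  finally show ?thesis by simp
qed

lemma has_weak_deriv_u: "has_weak_deriv u u'"
proof (rule has_weak_deriv_if_differentiable_off_finite[OF finite_S _ _ _ norm_u'_le])
  show "continuous_on UNIV u"
    by (intro continuous_intros continuous_on_compose2[OF continuous_\<rho>]
        continuous_on_compose2[OF continuous_\<theta>]) auto
  show "(u has_vector_derivative u' x) (at x)" if "x \<notin> S" for x
  proof -
    have "((\<lambda>x. cis (\<theta> x)) has_vector_derivative \<i> * complex_of_real (\<theta>' x) * cis (\<theta> x)) (at x)"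
      using has_derivative_cis[OF \<theta>_deriv[OF that, unfolded has_field_derivative_def]]
      by (simp add: has_vector_derivative_def scaleR_conv_of_real mult.commute mult.left_commute)
    from has_vector_derivative_mult[OF has_vector_derivative_of_real[OF \<rho>_deriv[OF that]] this]
    show ?thesis by (simp add: add.commute)
  qed
qed measurable

lemma L2_u': "L2 u'"
proof (rule L2_if_bounded_support)
  show "norm (u' x) \<le> 3 * B * indicator {a..b} x" for x
    using norm_u'_le[of x] outside[of x] by (cases "x \<in> {a..b}") auto
qed measurable

lemma in_NE_u: "in_NE u"
  unfolding in_NE_def in_E_def
proof (intro conjI allI exI)
  show "has_weak_deriv u u'" "L2 u'" by (fact has_weak_deriv_u L2_u')+
  show "L2 (\<lambda>x. 1 - (cmod (u x))\<^sup>2)"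
  proof (rule L2_if_bounded_support)
    show "norm (1 - (cmod (u x))\<^sup>2) \<le> 3 * indicator {a..b} x" for x
    proof (cases "x \<in> {a..b}")
      case True
      have "(\<rho> x)\<^sup>2 < 4" using power_strict_mono[of "\<rho> x" 2 2] \<rho>_range[of x] by simp
      then have "\<bar>1 - (\<rho> x)\<^sup>2\<bar> \<le> 3" using zero_le_power2[of "\<rho> x"] by arith
      then show ?thesis using True by (simp add: norm_u)
    qed (use outside in \<open>simp add: norm_u\<close>)
  qed measurable
  show "0 < cmod (u x)" for x using \<rho>_range[of x] by (simp add: norm_u)
qed

lemma momentum_u: "momentum u = (1/2) * (\<integral>x. G \<bar>1 - \<rho> x\<bar> * \<theta>' x \<partial>lborel)"
proof -
  have L2_\<theta>': "L2 \<theta>'"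
    by (rule L2_if_bounded_support[of _ B a b]) (use \<theta>'_bound outside in \<open>auto simp: indicator_def\<close>)
  have "is_lifting u \<theta>"
    unfolding is_lifting_def norm_u using has_weak_deriv_\<theta> L2_\<theta>' by blast
  then have "momentum u = (1/2) * (\<integral>x. G \<bar>1 - cmod (u x)\<bar> * \<theta>' x \<partial>lborel)"
    using has_weak_deriv_\<theta> L2_\<theta>' in_NE_u unfolding in_NE_def
    by (intro momentum_eq_lifting_integral) auto
  then show ?thesis by (simp add: norm_u)
qed

lemma in_setXqm: "(u, \<lambda>_. 0) \<in> setXqm ((1/2) * (\<integral>x. G \<bar>1 - \<rho> x\<bar> * \<theta>' x \<partial>lborel)) 0"
  unfolding setXqm_def setX_def using in_NE_u in_H1_zero momentum_u \<rho>_range by (simp add: norm_u)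

lemma energy_u:
  "energy \<alpha> \<beta> u (\<lambda>_. 0)
    = (\<integral>x. ((\<rho>' x)\<^sup>2 + (\<rho> x)\<^sup>2 * (\<theta>' x)\<^sup>2) / 2 + (1 - (\<rho> x)\<^sup>2)\<^sup>2 / 4 \<partial>lborel)"
proof -
  have [measurable]: "wderiv u \<in> borel_measurable borel"
    using wderiv_spec(2)[OF has_weak_deriv_u L2_u'] unfolding L2_def by simp
  have "energy \<alpha> \<beta> u (\<lambda>_. 0)
      = (\<integral>x. (cmod (wderiv u x))\<^sup>2 / 2 + (1 - (cmod (u x))\<^sup>2)\<^sup>2 / 4 \<partial>lborel)"
    using in_NE_u unfolding in_NE_def by (intro energy_zero_field) auto
  also have "\<dots> = (\<integral>x. ((\<rho>' x)\<^sup>2 + (\<rho> x)\<^sup>2 * (\<theta>' x)\<^sup>2) / 2 + (1 - (\<rho> x)\<^sup>2)\<^sup>2 / 4 \<partial>lborel)"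
    using wderiv_AE_eq[OF has_weak_deriv_u L2_u']
    by (intro integral_cong_AE) (auto simp: norm_u norm_u'_sq)
  finally show ?thesis .
qed

end

section \<open>The minimal energy at zero mass\<close>

definition dip_modulus :: "real \<Rightarrow> real \<Rightarrow> real \<Rightarrow> real" where
  "dip_modulus e L x = 1 - e * ramp x + e * ramp (x - 1 - L)"

definition dip_modulus_deriv :: "real \<Rightarrow> real \<Rightarrow> real \<Rightarrow> real" where
  "dip_modulus_deriv e L x = e * ramp_deriv (x - 1 - L) - e * ramp_deriv x"

definition twist_phase :: "real \<Rightarrow> real \<Rightarrow> real \<Rightarrow> real" where
  "twist_phase D L x = D * ramp ((x - 1) / L)"

definition twist_phase_deriv :: "real \<Rightarrow> real \<Rightarrow> real \<Rightarrow> real" where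
  "twist_phase_deriv D L x = D / L * ramp_deriv ((x - 1) / L)"

lemma borel_measurable_dip_modulus [measurable]: "dip_modulus e L \<in> borel_measurable borel"
  and borel_measurable_dip_modulus_deriv [measurable]: "dip_modulus_deriv e L \<in> borel_measurable borel"
  and borel_measurable_twist_phase_deriv [measurable]: "twist_phase_deriv D L \<in> borel_measurable borel"
  unfolding dip_modulus_def[abs_def] dip_modulus_deriv_def[abs_def] twist_phase_deriv_def[abs_def]
  by measurable

lemma dip_modulus_bounds:
  assumes "0 \<le> e" "0 \<le> L"
  shows "1 - e \<le> dip_modulus e L x" and "dip_modulus e L x \<le> 1"
proof -
  have "e * ramp (x - 1 - L) \<le> e * ramp x"
    using assms by (intro mult_left_mono ramp_mono) auto
  moreover have "e * ramp x \<le> e" "0 \<le> e * ramp (x - 1 - L)"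
    using assms mult_left_mono[of "ramp x" 1 e] ramp_bounds by auto
  ultimately show "1 - e \<le> dip_modulus e L x" "dip_modulus e L x \<le> 1"
    unfolding dip_modulus_def by auto
qed

lemma dip_modulus_outside:
  assumes "0 < L" "x \<notin> {0..2 + L}"
  shows "dip_modulus e L x = 1" and "dip_modulus_deriv e L x = 0"
  using assms by (auto simp: dip_modulus_def dip_modulus_deriv_def ramp_eq_0 ramp_eq_1 ramp_deriv_eq_0)

lemma dip_modulus_plateau:
  assumes "x \<in> {1..1 + L}"
  shows "dip_modulus e L x = 1 - e" and "dip_modulus_deriv e L x = 0"
  using assms by (auto simp: dip_modulus_def dip_modulus_deriv_def ramp_eq_0 ramp_eq_1 ramp_deriv_eq_0)

lemma abs_dip_modulus_deriv_le:
  assumes "0 \<le> e" "0 < L"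
  shows "\<bar>dip_modulus_deriv e L x\<bar> \<le> e"
  using assms by (auto simp: dip_modulus_deriv_def ramp_deriv_def)

lemma twist_phase_deriv_eq:
  assumes "0 < L"
  shows "twist_phase_deriv D L x = (if x \<in> {1<..<1 + L} then D / L else 0)"
  using assms by (auto simp: twist_phase_deriv_def ramp_deriv_def field_simps)

lemma polar_profile_dip:
  assumes e: "0 < e" "e < 1" and L: "0 < L"
  shows "polar_profile (dip_modulus e L) (twist_phase D L) (dip_modulus_deriv e L)
    (twist_phase_deriv D L) {0, 1, 1 + L, 2 + L} 0 (2 + L) (e + \<bar>D\<bar> / L)"
proof
  show "continuous_on UNIV (dip_modulus e L)" "continuous_on UNIV (twist_phase D L)"
    unfolding dip_modulus_def[abs_def] twist_phase_def[abs_def] using L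
    by (intro continuous_intros; simp)+
  show "(dip_modulus e L has_real_derivative dip_modulus_deriv e L x) (at x)"
    if "x \<notin> {0, 1, 1 + L, 2 + L}" for x
  proof -
    have "((\<lambda>x. ramp (x - 1 - L)) has_real_derivative ramp_deriv (x - 1 - L) * 1) (at x)"
      using that by (intro has_real_derivative_ramp_comp) (auto intro!: derivative_eq_intros)
    moreover have "(ramp has_real_derivative ramp_deriv x) (at x)"
      using that by (intro has_real_derivative_ramp) auto
    ultimately show ?thesis
      unfolding dip_modulus_def[abs_def] dip_modulus_deriv_def
      by (auto intro!: derivative_eq_intros)
  qed
  show "(twist_phase D L has_real_derivative twist_phase_deriv D L x) (at x)"
    if "x \<notin> {0, 1, 1 + L, 2 + L}" for x
  proof -
    have "((\<lambda>x. ramp ((x - 1) / L)) has_real_derivative ramp_deriv ((x - 1) / L) * (1 / L)) (at x)"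
      using that L by (intro has_real_derivative_ramp_comp) (auto intro!: derivative_eq_intros)
    then show ?thesis
      unfolding twist_phase_def[abs_def] twist_phase_deriv_def
      using DERIV_cmult by fastforce
  qed
  show "\<bar>dip_modulus_deriv e L x\<bar> \<le> e + \<bar>D\<bar> / L" for x
    using abs_dip_modulus_deriv_le[of e L x] e L by (simp add: add_increasing2)
  show "\<bar>twist_phase_deriv D L x\<bar> \<le> e + \<bar>D\<bar> / L" for x
    using e L by (simp add: twist_phase_deriv_eq)
  show "dip_modulus e L x = 1 \<and> dip_modulus_deriv e L x = 0 \<and> twist_phase_deriv D L x = 0"
    if "x \<notin> {0..2 + L}" for x
    using that L dip_modulus_outside[OF L that] by (auto simp: twist_phase_deriv_eq)
  show "0 < dip_modulus e L x \<and> dip_modulus e L x < 2" for x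
    using dip_modulus_bounds[of e L x] e L by auto
qed measurable

lemma dip_momentum_integral:
  fixes e L D :: real
  assumes e: "0 < e" "e < 1" and L: "0 < L"
  shows "(\<integral>x. G \<bar>1 - dip_modulus e L x\<bar> * twist_phase_deriv D L x \<partial>lborel) = e * (2 - e) * D"
proof -
  have "G \<bar>1 - dip_modulus e L x\<bar> * twist_phase_deriv D L x
      = indicator {1<..<1 + L} x * (e * (2 - e) * (D / L))" for x :: real
    using e L dip_modulus_plateau[of x L e] by (auto simp: twist_phase_deriv_eq G_def)
  then show ?thesis using L by simp
qed

lemma dip_energy_density_le:
  fixes e L D :: real
  assumes e: "0 < e" "e < 1" and L: "0 < L"
  shows "((dip_modulus_deriv e L x)\<^sup>2 + (dip_modulus e L x)\<^sup>2 * (twist_phase_deriv D L x)\<^sup>2) / 2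
      + (1 - (dip_modulus e L x)\<^sup>2)\<^sup>2 / 4
    \<le> indicator {0..1} x * (e\<^sup>2 / 2 + (e * (2 - e))\<^sup>2 / 4)
      + indicator {1 + L..2 + L} x * (e\<^sup>2 / 2 + (e * (2 - e))\<^sup>2 / 4)
      + indicator {1..1 + L} x * ((1 - e)\<^sup>2 * (D / L)\<^sup>2 / 2 + (e * (2 - e))\<^sup>2 / 4)"
    (is "?F \<le> ?B")
proof -
  let ?\<rho> = "dip_modulus e L x"
  define a where "a = e * (2 - e)"
  have a_eq: "e * (2 - e) = 1 - (1 - e)\<^sup>2" by (simp add: power2_eq_square algebra_simps)
  consider "x \<in> {1<..<1 + L}" | "x \<notin> {0..2 + L}" | "x \<in> {0..1} \<union> {1 + L..2 + L}" "x \<notin> {1<..<1 + L}"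
    by fastforce
  then show ?thesis
  proof cases
    case 1
    then show ?thesis
      using dip_modulus_plateau[of x L e] L
      by (auto simp: twist_phase_deriv_eq a_eq power_mult_distrib indicator_def)
  next
    case 2
    then show ?thesis
      using dip_modulus_outside[OF L] L by (auto simp: twist_phase_deriv_eq indicator_def)
  next
    case 3
    have "0 \<le> 1 - ?\<rho>\<^sup>2" "1 - ?\<rho>\<^sup>2 \<le> a"
      using dip_modulus_bounds[of e L x] e L unfolding a_def a_eq by (auto simp: power_le_one power_mono)
    then have "(1 - ?\<rho>\<^sup>2)\<^sup>2 \<le> a\<^sup>2" by (intro power_mono)
    moreover have "(dip_modulus_deriv e L x)\<^sup>2 \<le> e\<^sup>2"
      using abs_dip_modulus_deriv_le[of e L x] e L abs_le_square_iff[of "dip_modulus_deriv e L x" e]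
      by simp
    moreover have "?F = (dip_modulus_deriv e L x)\<^sup>2 / 2 + (1 - ?\<rho>\<^sup>2)\<^sup>2 / 4"
      using 3 L by (auto simp: twist_phase_deriv_eq)
    moreover have "e\<^sup>2 / 2 + a\<^sup>2 / 4 \<le> ?B"
      using 3 L by (auto simp: indicator_def a_def)
    ultimately show ?thesis by linarith
  qed
qed

lemma dip_energy_integral_le:
  fixes e L D :: real
  assumes e: "0 < e" "e < 1" and L: "0 < L"
  shows "(\<integral>x. ((dip_modulus_deriv e L x)\<^sup>2 + (dip_modulus e L x)\<^sup>2 * (twist_phase_deriv D L x)\<^sup>2) / 2
      + (1 - (dip_modulus e L x)\<^sup>2)\<^sup>2 / 4 \<partial>lborel)
    \<le> e\<^sup>2 + (e * (2 - e))\<^sup>2 / 2 + (1 - e)\<^sup>2 * D\<^sup>2 / (2 * L) + L * (e * (2 - e))\<^sup>2 / 4"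
proof -
  define F where "F x = ((dip_modulus_deriv e L x)\<^sup>2 + (dip_modulus e L x)\<^sup>2 * (twist_phase_deriv D L x)\<^sup>2) / 2
      + (1 - (dip_modulus e L x)\<^sup>2)\<^sup>2 / 4" for x
  define c1 c2 where "c1 = e\<^sup>2 / 2 + (e * (2 - e))\<^sup>2 / 4"
    and "c2 = (1 - e)\<^sup>2 * (D / L)\<^sup>2 / 2 + (e * (2 - e))\<^sup>2 / 4"
  define B where "B x = indicator {0..1} x * c1 + indicator {1 + L..2 + L} x * c1
      + indicator {1..1 + L} x * c2" for x :: real
  have F_le: "F x \<le> B x" for x
    unfolding F_def B_def c1_def c2_def by (rule dip_energy_density_le[OF e L])
  have int_B: "integrable lborel B"
    unfolding B_def[abs_def] by (simp add: emeasure_lborel_Icc_eq)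
  have "integrable lborel F"
  proof (rule Bochner_Integration.integrable_bound[OF int_B])
    show "F \<in> borel_measurable lborel"
      unfolding F_def[abs_def] by measurable
    have "0 \<le> F x" for x
      unfolding F_def by simp
    then show "AE x in lborel. norm (F x) \<le> norm (B x)"
      using F_le by (intro AE_I2) (metis abs_of_nonneg order_trans real_norm_def abs_ge_self)
  qed
  then have "(\<integral>x. F x \<partial>lborel) \<le> (\<integral>x. B x \<partial>lborel)"
    using int_B F_le by (intro integral_mono)
  also have "\<dots> = c1 + c1 + c2 * L"
    unfolding B_def[abs_def] using L by (simp add: emeasure_lborel_Icc_eq)
  also have "\<dots> = e\<^sup>2 + (e * (2 - e))\<^sup>2 / 2 + (1 - e)\<^sup>2 * D\<^sup>2 / (2 * L) + L * (e * (2 - e))\<^sup>2 / 4"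
    using L unfolding c1_def c2_def by (simp add: field_simps power2_eq_square)
  finally show ?thesis unfolding F_def .
qed

lemma Emin_zero_mass_le_dip:
  fixes e L D :: real
  assumes e: "0 < e" "e < 1" and L: "0 < L"
  shows "Emin \<alpha> \<beta> (e * (2 - e) * D / 2) 0
    \<le> ereal (e\<^sup>2 + (e * (2 - e))\<^sup>2 / 2 + (1 - e)\<^sup>2 * D\<^sup>2 / (2 * L) + L * (e * (2 - e))\<^sup>2 / 4)"
proof -
  interpret dip: polar_profile "dip_modulus e L" "twist_phase D L" "dip_modulus_deriv e L"
    "twist_phase_deriv D L" "{0, 1, 1 + L, 2 + L}" 0 "2 + L" "e + \<bar>D\<bar> / L"
    by (rule polar_profile_dip[OF e L])
  have "(dip.u, \<lambda>_. 0) \<in> setXqm (e * (2 - e) * D / 2) 0"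
    using dip.in_setXqm by (simp add: dip_momentum_integral[OF e L])
  then have "Emin \<alpha> \<beta> (e * (2 - e) * D / 2) 0 \<le> ereal (energy \<alpha> \<beta> dip.u (\<lambda>_. 0))"
    by (rule Emin_le_energy)
  also have "\<dots> \<le> ereal (e\<^sup>2 + (e * (2 - e))\<^sup>2 / 2 + (1 - e)\<^sup>2 * D\<^sup>2 / (2 * L) + L * (e * (2 - e))\<^sup>2 / 4)"
    using dip_energy_integral_le[OF e L, of D] unfolding dip.energy_u by simp
  finally show ?thesis .
qed

lemma Emin_zero_mass_less_sqrt2:
  assumes q: "0 < q" "q < pi / 2"
  shows "Emin \<alpha> \<beta> q 0 < ereal (sqrt 2 * q)"
proof -
  define e where "e = q / 4"
  define a where "a = e * (2 - e)"
  define D where "D = 2 * q / a"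
  define L where "L = sqrt 2 * (1 - e) * D / a"
  have e: "0 < e" "e < 1" using q pi_less_4 by (auto simp: e_def)
  have a: "0 < a" "a \<le> 2 * e" using e by (auto simp: a_def)
  have D: "0 < D" using a q by (simp add: D_def)
  have L: "0 < L" using e D a by (simp add: L_def)
  have aD: "a * D = 2 * q" using a by (simp add: D_def)
  have "e * (2 - e) * D / 2 = q" using aD by (simp add: a_def)
  then have "Emin \<alpha> \<beta> q 0 \<le> ereal (e\<^sup>2 + a\<^sup>2 / 2 + ((1 - e)\<^sup>2 * D\<^sup>2 / (2 * L) + L * a\<^sup>2 / 4))"
    using Emin_zero_mass_le_dip[OF e L, of \<alpha> \<beta> D] by (simp add: a_def add.assoc)
  \<comment> \<open>L balances the two phase terms, which then add up to \<open>sqrt 2 (1 - e) q\<close>.\<close>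
  also have "(1 - e)\<^sup>2 * D\<^sup>2 / (2 * L) + L * a\<^sup>2 / 4 = sqrt 2 * (1 - e) * q"
  proof -
    have "(1 - e)\<^sup>2 * D\<^sup>2 / (2 * L) = (1 - e) * (a * D) / (2 * sqrt 2)"
      using e a D unfolding L_def by (simp add: field_simps power2_eq_square)
    also have "\<dots> = sqrt 2 * (1 - e) * q / 2"
      unfolding aD by (simp add: field_simps real_sqrt_mult[symmetric])
    finally have "(1 - e)\<^sup>2 * D\<^sup>2 / (2 * L) = sqrt 2 * (1 - e) * q / 2" .
    moreover have "L * a\<^sup>2 / 4 = sqrt 2 * (1 - e) * (a * D) / 4"
      using a unfolding L_def by (simp add: field_simps power2_eq_square)
    then have "L * a\<^sup>2 / 4 = sqrt 2 * (1 - e) * q / 2"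
      unfolding aD by simp
    ultimately show ?thesis by linarith
  qed
  also have "e\<^sup>2 + a\<^sup>2 / 2 < sqrt 2 * e * q"
  proof -
    have "a\<^sup>2 \<le> (2 * e)\<^sup>2" using a by (intro power_mono) auto
    then have "e\<^sup>2 + a\<^sup>2 / 2 \<le> 3 * e\<^sup>2" by (simp add: power_mult_distrib)
    also have "\<dots> < (4 * sqrt 2) * e\<^sup>2"
    proof (rule mult_strict_right_mono)
      show "3 < 4 * sqrt (2::real)"
        using real_less_rsqrt[of "3 / 4" 2] by (simp add: power2_eq_square)
    qed (use e in simp)
    also have "\<dots> = sqrt 2 * e * q" by (simp add: e_def power2_eq_square)
    finally show ?thesis .
  qed
  then have "ereal (e\<^sup>2 + a\<^sup>2 / 2 + sqrt 2 * (1 - e) * q) < ereal (sqrt 2 * q)"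
    by (simp add: algebra_simps)
  finally show ?thesis .
qed

section \<open>Plateaus of prescribed mass\<close>

definition bump :: "real \<Rightarrow> real \<Rightarrow> real" where
  "bump L x = ramp (2 - \<bar>x\<bar> / L)"

definition bump_deriv :: "real \<Rightarrow> real \<Rightarrow> real" where
  "bump_deriv L x = - sgn x / L * ramp_deriv (2 - \<bar>x\<bar> / L)"

lemma bump_bounds: "0 \<le> bump L x" "bump L x \<le> 1"
  unfolding bump_def by (rule ramp_bounds)+

lemma bump_eq_1: "0 < L \<Longrightarrow> \<bar>x\<bar> \<le> L \<Longrightarrow> bump L x = 1"
  and bump_eq_0: "0 < L \<Longrightarrow> 2 * L \<le> \<bar>x\<bar> \<Longrightarrow> bump L x = 0"
  unfolding bump_def by (auto intro!: ramp_eq_1 ramp_eq_0 simp: field_simps)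

lemma bump_deriv_eq_0: "0 < L \<Longrightarrow> \<bar>x\<bar> \<notin> {L<..<2 * L} \<Longrightarrow> bump_deriv L x = 0"
  unfolding bump_deriv_def by (auto intro!: ramp_deriv_eq_0 simp: field_simps)

lemma abs_bump_deriv_le: "0 < L \<Longrightarrow> \<bar>bump_deriv L x\<bar> \<le> 1 / L"
  by (auto simp: bump_deriv_def ramp_deriv_def abs_mult sgn_if)

lemma borel_measurable_bump [measurable]: "bump L \<in> borel_measurable borel"
  unfolding bump_def[abs_def] by measurable

lemma borel_measurable_bump_deriv [measurable]: "bump_deriv L \<in> borel_measurable borel"
  unfolding bump_deriv_def[abs_def] by measurable

lemma has_real_derivative_bump:
  assumes L: "0 < L" and x: "x \<notin> {-2 * L, -L, 0, L, 2 * L}"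
  shows "(bump L has_real_derivative bump_deriv L x) (at x)"
proof (cases "x > 0")
  case True
  have "((\<lambda>x. ramp (2 - x / L)) has_real_derivative ramp_deriv (2 - x / L) * (0 - 1 / L)) (at x)"
    by (rule has_real_derivative_ramp_comp) (use x L True in \<open>auto simp: field_simps intro!: derivative_eq_intros\<close>)
  moreover have "ramp_deriv (2 - x / L) * (0 - 1 / L) = bump_deriv L x"
    using True by (simp add: bump_deriv_def)
  ultimately have "((\<lambda>x. ramp (2 - x / L)) has_real_derivative bump_deriv L x) (at x)"
    by simp
  then show ?thesis
    by (rule has_field_derivative_transform_within_open[where S = "{0<..}"])
       (use True in \<open>auto simp: bump_def\<close>)
next
  case False
  with x have "x < 0" by auto
  have "((\<lambda>x. ramp (2 + x / L)) has_real_derivative ramp_deriv (2 + x / L) * (0 + 1 / L)) (at x)"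
    by (rule has_real_derivative_ramp_comp) (use x L \<open>x < 0\<close> in \<open>auto simp: field_simps intro!: derivative_eq_intros\<close>)
  moreover have "ramp_deriv (2 + x / L) * (0 + 1 / L) = bump_deriv L x"
    using \<open>x < 0\<close> by (simp add: bump_deriv_def)
  ultimately have "((\<lambda>x. ramp (2 + x / L)) has_real_derivative bump_deriv L x) (at x)"
    by simp
  then show ?thesis
    by (rule has_field_derivative_transform_within_open[where S = "{..<0}"])
       (use \<open>x < 0\<close> in \<open>auto simp: bump_def\<close>)
qed

lemma has_weak_deriv_bump:
  assumes "0 < L"
  shows "has_weak_deriv (bump L) (bump_deriv L)"
proof (rule has_weak_deriv_if_differentiable_off_finite[of "{-2 * L, -L, 0, L, 2 * L}"])
  show "continuous_on UNIV (bump L)"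
    unfolding bump_def[abs_def] using assms by (intro continuous_intros) auto
  show "(bump L has_vector_derivative bump_deriv L x) (at x)" if "x \<notin> {-2 * L, -L, 0, L, 2 * L}" for x
    using has_real_derivative_bump[OF assms that] by (simp add: has_real_derivative_iff_has_vector_derivative)
  show "norm (bump_deriv L x) \<le> 1 / L" for x
    using abs_bump_deriv_le[OF assms] by simp
qed (use finite.insertI in measurable)

lemma L2_bump_deriv: "0 < L \<Longrightarrow> L2 (bump_deriv L)"
  by (rule L2_if_bounded_support[of _ "1 / L" "-2 * L" "2 * L"])
     (use abs_bump_deriv_le bump_deriv_eq_0 in \<open>auto simp: indicator_def\<close>)

lemma bump_sq_le_indicator: "0 < L \<Longrightarrow> (bump L x)\<^sup>2 \<le> indicator {- (2 * L)..2 * L} x"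
  using bump_bounds[of L x] bump_eq_0[of L x] by (auto simp: indicator_def power_le_one)

lemma bump_deriv_sq_le_indicator:
  "0 < L \<Longrightarrow> (bump_deriv L x)\<^sup>2 \<le> indicator {- (2 * L)..2 * L} x * (1 / L)\<^sup>2"
proof (cases "x \<in> {- (2 * L)..2 * L}")
  case True
  assume "0 < L"
  then have "\<bar>bump_deriv L x\<bar>\<^sup>2 \<le> (1 / L)\<^sup>2"
    using abs_bump_deriv_le[of L x] by (intro power_mono) auto
  then show ?thesis using True by simp
qed (auto simp: bump_deriv_eq_0)

definition bump_mass :: "real \<Rightarrow> real" where
  "bump_mass L = (\<integral>x. (bump L x)\<^sup>2 \<partial>lborel)"

lemma integrable_bump_sq: "0 < L \<Longrightarrow> integrable lborel (\<lambda>x. (bump L x)\<^sup>2)"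
  by (rule Bochner_Integration.integrable_bound[OF integrable_indicator_Icc[of "- (2 * L)" "2 * L"]])
     (auto intro!: AE_I2 simp: bump_sq_le_indicator)

lemma bump_mass_bounds:
  assumes L: "0 < L"
  shows "2 * L \<le> bump_mass L" and "bump_mass L \<le> 4 * L"
proof -
  have "(\<integral>x. indicator {-L..L} x \<partial>lborel) \<le> bump_mass L"
    unfolding bump_mass_def using L bump_eq_1[OF L] bump_bounds[of L]
    by (intro integral_mono integrable_bump_sq integrable_indicator_Icc) (auto simp: indicator_def)
  then show "2 * L \<le> bump_mass L" using L by simp
  have "bump_mass L \<le> (\<integral>x. indicator {- (2 * L)..2 * L} x \<partial>lborel)"
    unfolding bump_mass_def using L bump_sq_le_indicator[OF L]
    by (intro integral_mono integrable_bump_sq integrable_indicator_Icc) auto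
  then show "bump_mass L \<le> 4 * L" using L by simp
qed

lemma bump_pow4_le_sq: "(bump L x) ^ 4 \<le> (bump L x)\<^sup>2"
proof -
  have "(bump L x) ^ 4 = (bump L x)\<^sup>2 * (bump L x)\<^sup>2" by algebra
  also have "\<dots> \<le> (bump L x)\<^sup>2 * 1"
    using bump_bounds[of L x] by (intro mult_left_mono) (auto simp: power_le_one)
  finally show ?thesis by simp
qed

lemma integrable_bump_pow4: "0 < L \<Longrightarrow> integrable lborel (\<lambda>x. (bump L x) ^ 4)"
  by (rule Bochner_Integration.integrable_bound[OF integrable_bump_sq]) (auto simp: bump_pow4_le_sq)

lemma integral_bump_pow4_le: "0 < L \<Longrightarrow> (\<integral>x. (bump L x) ^ 4 \<partial>lborel) \<le> bump_mass L"
  unfolding bump_mass_def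
  by (intro integral_mono integrable_bump_pow4 integrable_bump_sq bump_pow4_le_sq)

lemma integral_bump_deriv_sq_le:
  assumes L: "0 < L"
  shows "(\<integral>x. (bump_deriv L x)\<^sup>2 \<partial>lborel) \<le> 4 / L"
proof -
  have "(\<integral>x. (bump_deriv L x)\<^sup>2 \<partial>lborel) \<le> (\<integral>x. indicator {- (2 * L)..2 * L} x * (1 / L)\<^sup>2 \<partial>lborel)"
    using L2_bump_deriv[OF L] bump_deriv_sq_le_indicator[OF L] unfolding L2_def
    by (intro integral_mono) (auto simp: emeasure_lborel_Icc_eq)
  also have "\<dots> = 4 / L" using L by (simp add: power2_eq_square field_simps)
  finally show ?thesis .
qed

definition mass_bump :: "real \<Rightarrow> real \<Rightarrow> real \<Rightarrow> real" where
  "mass_bump m L x = sqrt (m / bump_mass L) * bump L x"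

lemma borel_measurable_mass_bump [measurable]: "mass_bump m L \<in> borel_measurable borel"
  unfolding mass_bump_def[abs_def] by measurable

context
  fixes m L :: real
  assumes m: "0 \<le> m" and L: "0 < L"
begin

private lemma bump_mass_pos: "0 < bump_mass L"
  using bump_mass_bounds(1)[OF L] L by linarith

lemma mass_bump_sq: "(mass_bump m L x)\<^sup>2 = m / bump_mass L * (bump L x)\<^sup>2"
  using m bump_mass_pos by (simp add: mass_bump_def power_mult_distrib)

lemma mass_bump_mass: "(\<integral>x. (mass_bump m L x)\<^sup>2 \<partial>lborel) = m"
  using bump_mass_pos by (simp add: mass_bump_sq bump_mass_def[symmetric])

lemma has_weak_deriv_mass_bump:
  "has_weak_deriv (mass_bump m L) (\<lambda>x. sqrt (m / bump_mass L) * bump_deriv L x)"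
  using has_weak_deriv_scaleR[OF has_weak_deriv_bump[OF L]] by (simp add: mass_bump_def[abs_def])

lemma L2_mass_bump_deriv: "L2 (\<lambda>x. sqrt (m / bump_mass L) * bump_deriv L x)"
  using L2_bump_deriv[OF L] unfolding L2_def by (simp add: power_mult_distrib)

lemma in_H1_mass_bump: "in_H1 (mass_bump m L)"
proof -
  have "L2 (mass_bump m L)"
    using integrable_bump_sq[OF L] unfolding L2_def mass_bump_def[abs_def]
    by (simp add: power_mult_distrib)
  then show ?thesis
    unfolding in_H1_def using has_weak_deriv_mass_bump L2_mass_bump_deriv by blast
qed

lemma integral_wderiv_mass_bump_sq_le:
  "(\<integral>x. (wderiv (mass_bump m L) x)\<^sup>2 \<partial>lborel) \<le> m / bump_mass L * (4 / L)"
proof -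
  have [measurable]: "wderiv (mass_bump m L) \<in> borel_measurable borel"
    using wderiv_spec(2)[OF has_weak_deriv_mass_bump L2_mass_bump_deriv] unfolding L2_def by simp
  have "(\<integral>x. (wderiv (mass_bump m L) x)\<^sup>2 \<partial>lborel)
      = (\<integral>x. m / bump_mass L * (bump_deriv L x)\<^sup>2 \<partial>lborel)"
    using wderiv_AE_eq[OF has_weak_deriv_mass_bump L2_mass_bump_deriv] m bump_mass_pos
    by (intro integral_cong_AE) (auto simp: power_mult_distrib)
  also have "\<dots> = m / bump_mass L * (\<integral>x. (bump_deriv L x)\<^sup>2 \<partial>lborel)"
    by simp
  also have "\<dots> \<le> m / bump_mass L * (4 / L)"
    using integral_bump_deriv_sq_le[OF L] m bump_mass_pos by (intro mult_left_mono) auto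
  finally show ?thesis .
qed

lemma mass_bump_pow4: "(mass_bump m L x) ^ 4 = (m / bump_mass L)\<^sup>2 * (bump L x) ^ 4"
proof -
  have "(mass_bump m L x) ^ 4 = ((mass_bump m L x)\<^sup>2)\<^sup>2" by simp
  also have "\<dots> = (m / bump_mass L * (bump L x)\<^sup>2)\<^sup>2" by (simp only: mass_bump_sq)
  also have "\<dots> = (m / bump_mass L)\<^sup>2 * (bump L x) ^ 4"
    unfolding power_mult_distrib by (simp flip: power_mult)
  finally show ?thesis .
qed

lemma integrable_mass_bump_pow4: "integrable lborel (\<lambda>x. (mass_bump m L x) ^ 4)"
  using integrable_bump_pow4[OF L] by (simp add: mass_bump_pow4)

lemma integral_mass_bump_pow4_le: "(\<integral>x. (mass_bump m L x) ^ 4 \<partial>lborel) \<le> m\<^sup>2 / bump_mass L"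
proof -
  have "(\<integral>x. (mass_bump m L x) ^ 4 \<partial>lborel) \<le> (m / bump_mass L)\<^sup>2 * bump_mass L"
    using integral_bump_pow4_le[OF L] by (simp add: mass_bump_pow4 mult_left_mono)
  then show ?thesis using bump_mass_pos by (simp add: power2_eq_square)
qed

lemma mass_bump_sq_on_plateau: "x \<in> {-L..L} \<Longrightarrow> (mass_bump m L x)\<^sup>2 = m / bump_mass L"
  using bump_eq_1[OF L, of x] by (simp add: mass_bump_sq abs_le_iff)

lemma mass_bump_in_setXqm: "(u, \<lambda>_. 0) \<in> setXqm q 0 \<Longrightarrow> (u, mass_bump m L) \<in> setXqm q m"
  using in_H1_mass_bump mass_bump_mass by (simp add: setXqm_def setX_def)

lemma energy_mass_bump:
  assumes "in_E u"
  shows "energy \<alpha> \<beta> u (mass_bump m L) = energy \<alpha> \<beta> u (\<lambda>_. 0)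
    + (\<integral>x. (wderiv (mass_bump m L) x)\<^sup>2 \<partial>lborel) / 2 + \<beta> / 4 * (\<integral>x. (mass_bump m L x) ^ 4 \<partial>lborel)
    - \<alpha> / 2 * (\<integral>x. (1 - (cmod (u x))\<^sup>2) * (mass_bump m L x)\<^sup>2 \<partial>lborel)"
  by (rule energy_add_field[OF assms in_H1_mass_bump integrable_mass_bump_pow4])

lemma abs_integral_coupling_mass_bump_le:
  assumes w2: "integrable lborel (\<lambda>x. (w x)\<^sup>2)" and [measurable]: "w \<in> borel_measurable borel"
    and L1: "1 \<le> L"
  shows "\<bar>\<integral>x. w x * (mass_bump m L x)\<^sup>2 \<partial>lborel\<bar> \<le> ((\<integral>x. (w x)\<^sup>2 \<partial>lborel) + m\<^sup>2 / 2) / (2 * sqrt L)"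
proof -
  define s where "s = sqrt L"
  have s: "1 \<le> s" "L = s * s" using L1 by (auto simp: s_def)
  have "(\<integral>x. (mass_bump m L x) ^ 4 \<partial>lborel) \<le> m\<^sup>2 / bump_mass L"
    by (rule integral_mass_bump_pow4_le)
  also have "\<dots> \<le> m\<^sup>2 / (2 * L)"
    using bump_mass_bounds(1)[OF L] L by (intro divide_left_mono) auto
  finally have quartic: "(\<integral>x. (mass_bump m L x) ^ 4 \<partial>lborel) * s \<le> m\<^sup>2 / (2 * L) * s"
    using s(1) by (intro mult_right_mono) auto
  \<comment> \<open>Young's inequality with weight \<open>1 / sqrt L\<close> balances the two terms.\<close>
  have "\<bar>\<integral>x. w x * (mass_bump m L x)\<^sup>2 \<partial>lborel\<bar>
      \<le> (1 / s * (\<integral>x. (w x)\<^sup>2 \<partial>lborel) + (\<integral>x. (mass_bump m L x) ^ 4 \<partial>lborel) / (1 / s)) / 2"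
    using w2 integrable_mass_bump_pow4 s(1) by (intro abs_integral_mult_square_le) auto
  also have "\<dots> \<le> ((\<integral>x. (w x)\<^sup>2 \<partial>lborel) / s + m\<^sup>2 / (2 * L) * s) / 2"
    using quartic by simp
  also have "\<dots> = ((\<integral>x. (w x)\<^sup>2 \<partial>lborel) + m\<^sup>2 / 2) / (2 * s)"
    using s by (simp add: field_simps)
  finally show ?thesis unfolding s_def .
qed

lemma integral_coupling_mass_bump_ge:
  assumes w2: "integrable lborel (\<lambda>x. (w x)\<^sup>2)" and [measurable]: "w \<in> borel_measurable borel"
    and w_nonneg: "\<And>x. 0 \<le> w x"
  shows "m / bump_mass L * (\<integral>x. indicator {-L..L} x * w x \<partial>lborel)
    \<le> (\<integral>x. w x * (mass_bump m L x)\<^sup>2 \<partial>lborel)"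
proof -
  have "m / bump_mass L * (\<integral>x. indicator {-L..L} x * w x \<partial>lborel)
      = (\<integral>x. m / bump_mass L * (indicator {-L..L} x * w x) \<partial>lborel)"
    by simp
  also have "\<dots> \<le> (\<integral>x. w x * (mass_bump m L x)\<^sup>2 \<partial>lborel)"
  proof (rule integral_mono)
    have indicator_pow: "(indicator {-L..L} x :: real) ^ n = indicator {-L..L} x" if "n > 0" for x n
      using that by (simp add: indicator_def)
    have "integrable lborel (\<lambda>x. w x * (indicator {-L..L} x)\<^sup>2)"
      using w2 integrable_indicator_Icc[of "-L" L]
      by (intro integrable_mult_square) (auto simp: indicator_pow)
    then show "integrable lborel (\<lambda>x. m / bump_mass L * (indicator {-L..L} x * w x))"
      by (simp add: indicator_pow mult.commute)
    show "integrable lborel (\<lambda>x. w x * (mass_bump m L x)\<^sup>2)"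
      using w2 integrable_mass_bump_pow4 by (intro integrable_mult_square) auto
    show "m / bump_mass L * (indicator {-L..L} x * w x) \<le> w x * (mass_bump m L x)\<^sup>2" for x
      using w_nonneg[of x] mass_bump_sq_on_plateau[of x]
      by (cases "x \<in> {-L..L}") (auto simp: mult.commute)
  qed
  finally show ?thesis .
qed

lemma energy_mass_bump_le:
  assumes u: "in_E u" and L1: "1 \<le> L" and \<alpha>: "0 \<le> \<alpha>" and \<beta>: "0 \<le> \<beta>"
  shows "energy \<alpha> \<beta> u (mass_bump m L) \<le> energy \<alpha> \<beta> u (\<lambda>_. 0)
    + (m + \<beta> * m\<^sup>2 / 8 + \<alpha> * ((\<integral>x. (1 - (cmod (u x))\<^sup>2)\<^sup>2 \<partial>lborel) + m\<^sup>2 / 2) / 4) / sqrt L"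
proof -
  define w where "w x = 1 - (cmod (u x))\<^sup>2" for x
  define s where "s = sqrt L"
  have s: "1 \<le> s" "L = s * s" using L1 by (auto simp: s_def)
  have s_le_L: "s \<le> L" using mult_left_mono[OF s(1), of s] s by simp
  have C: "2 * L \<le> bump_mass L" by (rule bump_mass_bounds(1)[OF L])
  have m_L: "0 \<le> m / L" "m / L \<le> m" using m L1 by (auto simp: divide_le_eq mult_le_cancel_left1)
  have "(\<integral>x. (wderiv (mass_bump m L) x)\<^sup>2 \<partial>lborel) / 2 \<le> m / bump_mass L * (2 / L)"
    using integral_wderiv_mass_bump_sq_le by (simp add: mult.commute)
  also have "\<dots> \<le> m / (2 * L) * (2 / L)"
    using C m L by (intro mult_right_mono divide_left_mono) auto
  also have "\<dots> = m / L / L" by simp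
  also have "\<dots> \<le> m / L / s"
    using m_L s s_le_L by (intro divide_left_mono) auto
  also have "\<dots> \<le> m / s"
    using m_L s by (intro divide_right_mono) auto
  finally have kinetic: "(\<integral>x. (wderiv (mass_bump m L) x)\<^sup>2 \<partial>lborel) / 2 \<le> m / s" .
  have "\<beta> / 4 * (\<integral>x. (mass_bump m L x) ^ 4 \<partial>lborel) \<le> \<beta> / 4 * (m\<^sup>2 / (2 * L))"
    using integral_mass_bump_pow4_le C L \<beta> order_trans divide_left_mono[OF C, of "m\<^sup>2"]
    by (intro mult_left_mono) auto
  also have "\<dots> \<le> \<beta> * m\<^sup>2 / 8 / s"
    using \<beta> s s_le_L divide_left_mono[OF s_le_L, of "\<beta> * m\<^sup>2 / 8"] by simp
  finally have quartic: "\<beta> / 4 * (\<integral>x. (mass_bump m L x) ^ 4 \<partial>lborel) \<le> \<beta> * m\<^sup>2 / 8 / s" .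
  have w2: "integrable lborel (\<lambda>x. (w x)\<^sup>2)" "w \<in> borel_measurable borel"
    using u in_E_borel_measurable[OF u] unfolding in_E_def L2_def w_def by auto
  have "- (\<alpha> / 2 * (\<integral>x. w x * (mass_bump m L x)\<^sup>2 \<partial>lborel))
      \<le> \<alpha> / 2 * (((\<integral>x. (w x)\<^sup>2 \<partial>lborel) + m\<^sup>2 / 2) / (2 * s))"
    using abs_integral_coupling_mass_bump_le[OF w2 L1] \<alpha> unfolding s_def
    by (subst minus_mult_right) (rule mult_left_mono, auto)
  moreover have "m / s + \<beta> * m\<^sup>2 / 8 / s + \<alpha> / 2 * (((\<integral>x. (w x)\<^sup>2 \<partial>lborel) + m\<^sup>2 / 2) / (2 * s))
      = (m + \<beta> * m\<^sup>2 / 8 + \<alpha> * ((\<integral>x. (w x)\<^sup>2 \<partial>lborel) + m\<^sup>2 / 2) / 4) / s"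
    using s(1) by (simp add: field_simps)
  ultimately show ?thesis
    using energy_mass_bump[OF u, of \<alpha> \<beta>] kinetic quartic unfolding w_def s_def by linarith
qed

lemma energy_mass_bump_le_plateau:
  assumes u: "in_E u" and unit: "\<And>x. cmod (u x) \<le> 1" and \<alpha>: "0 \<le> \<alpha>" and \<beta>: "0 \<le> \<beta>"
  shows "energy \<alpha> \<beta> u (mass_bump m L) \<le> energy \<alpha> \<beta> u (\<lambda>_. 0) + m / bump_mass L
    * (2 / L + \<beta> * m / 4 - \<alpha> / 2 * (\<integral>x. indicator {-L..L} x * (1 - (cmod (u x))\<^sup>2) \<partial>lborel))"
proof -
  define w where "w x = 1 - (cmod (u x))\<^sup>2" for x
  define WL where "WL = (\<integral>x. indicator {-L..L} x * w x \<partial>lborel)"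
  have w2: "integrable lborel (\<lambda>x. (w x)\<^sup>2)" "w \<in> borel_measurable borel"
    using u in_E_borel_measurable[OF u] unfolding in_E_def L2_def w_def by auto
  have "0 \<le> w x" for x
    using unit[of x] by (simp add: w_def power_le_one)
  then have coupling: "\<alpha> / 2 * (m / bump_mass L * WL) \<le> \<alpha> / 2 * (\<integral>x. w x * (mass_bump m L x)\<^sup>2 \<partial>lborel)"
    using integral_coupling_mass_bump_ge[OF w2] \<alpha> unfolding WL_def by (intro mult_left_mono) auto
  have kinetic: "(\<integral>x. (wderiv (mass_bump m L) x)\<^sup>2 \<partial>lborel) / 2 \<le> m / bump_mass L * (2 / L)"
    using integral_wderiv_mass_bump_sq_le by (simp add: mult.commute)
  have "\<beta> / 4 * (\<integral>x. (mass_bump m L x) ^ 4 \<partial>lborel) \<le> \<beta> / 4 * (m\<^sup>2 / bump_mass L)"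
    using integral_mass_bump_pow4_le \<beta> by (intro mult_left_mono) auto
  then have quartic: "\<beta> / 4 * (\<integral>x. (mass_bump m L x) ^ 4 \<partial>lborel) \<le> m / bump_mass L * (\<beta> * m / 4)"
    by (simp add: power2_eq_square mult.commute mult.left_commute)
  have "m / bump_mass L * (2 / L + \<beta> * m / 4 - \<alpha> / 2 * WL)
      = m / bump_mass L * (2 / L) + m / bump_mass L * (\<beta> * m / 4) - \<alpha> / 2 * (m / bump_mass L * WL)"
    by (simp add: algebra_simps)
  then show ?thesis
    using energy_mass_bump[OF u, of \<alpha> \<beta>] kinetic quartic coupling unfolding WL_def w_def by linarith
qed
end

section \<open>Adding mass\<close>

lemma Emin_le_Emin_zero_mass:
  assumes \<alpha>: "0 \<le> \<alpha>" and \<beta>: "0 \<le> \<beta>" and m: "0 \<le> m"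
  shows "Emin \<alpha> \<beta> q m \<le> Emin \<alpha> \<beta> q 0"
  unfolding Emin_def[of \<alpha> \<beta> q 0]
proof (rule INF_greatest)
  fix p assume p: "p \<in> setXqm q 0"
  obtain u v0 where p_eq: "p = (u, v0)" by (cases p)
  with p have "in_H1 v0" "(\<integral>x. (v0 x)\<^sup>2 \<partial>lborel) = 0" by (auto simp: setXqm_def setX_def)
  then have v0: "v0 = (\<lambda>_. 0)" by (rule in_H1_eq_0_if_mass_0)
  with p p_eq have u0: "(u, \<lambda>_. 0) \<in> setXqm q 0" and u: "in_E u"
    by (auto simp: setXqm_def setX_def in_NE_def)
  define K where "K = m + \<beta> * m\<^sup>2 / 8 + \<alpha> * ((\<integral>x. (1 - (cmod (u x))\<^sup>2)\<^sup>2 \<partial>lborel) + m\<^sup>2 / 2) / 4"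
  have K: "0 \<le> K" unfolding K_def using \<alpha> \<beta> m by simp
  have "Emin \<alpha> \<beta> q m \<le> ereal (energy \<alpha> \<beta> u (\<lambda>_. 0)) + ereal \<eta>" if \<eta>: "0 < \<eta>" for \<eta>
  proof -
    define L where "L = max 1 ((K / \<eta>)\<^sup>2)"
    have L: "1 \<le> L" "0 < L" by (auto simp: L_def)
    have "K / \<eta> \<le> sqrt L"
      unfolding L_def using K \<eta> real_sqrt_le_mono[of "(K / \<eta>)\<^sup>2" "max 1 ((K / \<eta>)\<^sup>2)"] by simp
    then have "K / sqrt L \<le> \<eta>"
      using \<eta> L by (simp add: divide_le_eq mult.commute pos_divide_le_eq)
    moreover have "Emin \<alpha> \<beta> q m \<le> ereal (energy \<alpha> \<beta> u (mass_bump m L))"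
      by (rule Emin_le_energy[OF mass_bump_in_setXqm[OF m L(2) u0]])
    moreover have "energy \<alpha> \<beta> u (mass_bump m L) \<le> energy \<alpha> \<beta> u (\<lambda>_. 0) + K / sqrt L"
      unfolding K_def by (rule energy_mass_bump_le[OF m L(2) u L(1) \<alpha> \<beta>])
    ultimately show ?thesis
      by (simp add: order_trans)
  qed
  then have "Emin \<alpha> \<beta> q m \<le> ereal (energy \<alpha> \<beta> u (\<lambda>_. 0))"
    by (rule ereal_le_epsilon2)
  then show "Emin \<alpha> \<beta> q m \<le> ereal (energy \<alpha> \<beta> (fst p) (snd p))"
    by (simp add: p_eq v0)
qed

lemma eventually_energy_mass_bump_less:
  assumes u: "in_E u" and unit: "\<And>x. cmod (u x) \<le> 1" and \<alpha>: "0 \<le> \<alpha>" and \<beta>: "0 \<le> \<beta>" and m: "0 < m"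
    and small_mass: "m * \<beta> < 2 * \<alpha> * (\<integral>x. 1 - (cmod (u x))\<^sup>2 \<partial>lborel)"
  shows "\<forall>\<^sub>F n in sequentially. energy \<alpha> \<beta> u (mass_bump m (real n)) < energy \<alpha> \<beta> u (\<lambda>_. 0)"
proof -
  define w where "w x = 1 - (cmod (u x))\<^sup>2" for x
  define excess where "excess n = 2 / real n + \<beta> * m / 4
    - \<alpha> / 2 * (\<integral>x. indicator {- real n..real n} x * w x \<partial>lborel)" for n
  have "integrable lborel w"
  proof (rule ccontr)
    assume "\<not> integrable lborel w"
    then have "(\<integral>x. w x \<partial>lborel) = 0" by (rule not_integrable_integral_eq)
    moreover have "0 \<le> m * \<beta>" using m \<beta> by simp
    ultimately show False using small_mass unfolding w_def by simp
  qed
  then have "excess \<longlonglongrightarrow> 0 + \<beta> * m / 4 - \<alpha> / 2 * (\<integral>x. w x \<partial>lborel)"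
    unfolding excess_def[abs_def] by (intro tendsto_intros integral_symmetric_intervals_tendsto)
  moreover have "0 + \<beta> * m / 4 - \<alpha> / 2 * (\<integral>x. w x \<partial>lborel) < 0"
    using small_mass unfolding w_def by (simp add: algebra_simps)
  ultimately have "\<forall>\<^sub>F n in sequentially. excess n < 0"
    by (rule order_tendstoD)
  then show ?thesis
    using eventually_gt_at_top[of 0]
  proof eventually_elim
    case (elim n)
    then have L: "0 < real n" by simp
    have "0 < m / bump_mass (real n)"
      using m bump_mass_bounds(1)[OF L] L by simp
    then have "m / bump_mass (real n) * excess n < 0"
      using elim by (intro mult_pos_neg)
    moreover have "energy \<alpha> \<beta> u (mass_bump m (real n))
        \<le> energy \<alpha> \<beta> u (\<lambda>_. 0) + m / bump_mass (real n) * excess n"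
      unfolding excess_def w_def using m by (intro energy_mass_bump_le_plateau[OF _ L u unit \<alpha> \<beta>]) auto
    ultimately show ?case by linarith
  qed
qed

lemma Emin_less_Emin_zero_mass:
  assumes \<alpha>: "0 < \<alpha>" and \<beta>: "0 \<le> \<beta>" and m: "0 < m"
    and soliton: "is_dark_soliton \<alpha> \<beta> q uq"
    and small_mass: "m * \<beta> < 2 * \<alpha> * (\<integral>x. 1 - (cmod (uq x))\<^sup>2 \<partial>lborel)"
  shows "Emin \<alpha> \<beta> q m < Emin \<alpha> \<beta> q 0"
proof -
  have u: "in_NE uq" and unit: "\<And>x. 0 < cmod (uq x) \<and> cmod (uq x) < 1"
    and "momentum uq = q" and E0: "ereal (energy \<alpha> \<beta> uq (\<lambda>_. 0)) = Emin \<alpha> \<beta> q 0"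
    using soliton unfolding is_dark_soliton_def by auto
  moreover have "cmod (uq x) < 2" for x
    using unit[of x] by linarith
  ultimately have u0: "(uq, \<lambda>_. 0) \<in> setXqm q 0"
    using in_H1_zero by (auto simp: setXqm_def setX_def)
  have "\<forall>\<^sub>F n in sequentially. energy \<alpha> \<beta> uq (mass_bump m (real n)) < energy \<alpha> \<beta> uq (\<lambda>_. 0)"
    using u unit \<alpha> \<beta> m small_mass unfolding in_NE_def
    by (intro eventually_energy_mass_bump_less) (auto simp: less_imp_le)
  moreover have "\<forall>\<^sub>F n in sequentially. 0 < real n"
    by (simp add: eventually_gt_at_top)
  ultimately obtain n where n: "energy \<alpha> \<beta> uq (mass_bump m (real n)) < energy \<alpha> \<beta> uq (\<lambda>_. 0)"
    and L: "0 < real n"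
    using eventually_happens'[OF sequentially_bot eventually_conj] by blast
  have "Emin \<alpha> \<beta> q m \<le> ereal (energy \<alpha> \<beta> uq (mass_bump m (real n)))"
    using Emin_le_energy[OF mass_bump_in_setXqm[OF _ L u0]] m by simp
  also have "\<dots> < Emin \<alpha> \<beta> q 0"
    using n unfolding E0[symmetric] by simp
  finally show ?thesis .
qed

theorem lemma4p3:
  fixes \<alpha> \<beta> q m :: real
  assumes "\<alpha> > 0" and "\<beta> \<ge> 0" and "0 < q" and "q < pi / 2" and "m \<ge> 0"
  shows "Emin \<alpha> \<beta> q m \<le> Emin \<alpha> \<beta> q 0 \<and> Emin \<alpha> \<beta> q 0 < ereal (sqrt 2 * q) \<and>
    (\<forall>uq. is_dark_soliton \<alpha> \<beta> q uq \<longrightarrow> m > 0 \<longrightarrow>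
       m * \<beta> < 2 * \<alpha> * (\<integral>x. 1 - (cmod (uq x))^2 \<partial>lborel) \<longrightarrow>
       Emin \<alpha> \<beta> q m < Emin \<alpha> \<beta> q 0)"
proof (intro conjI allI impI)
  show "Emin \<alpha> \<beta> q m \<le> Emin \<alpha> \<beta> q 0"
    using assms(1,2,5) by (intro Emin_le_Emin_zero_mass) auto
  show "Emin \<alpha> \<beta> q 0 < ereal (sqrt 2 * q)"
    using assms(3,4) by (rule Emin_zero_mass_less_sqrt2)
  show "Emin \<alpha> \<beta> q m < Emin \<alpha> \<beta> q 0"
    if "is_dark_soliton \<alpha> \<beta> q uq" "m > 0" "m * \<beta> < 2 * \<alpha> * (\<integral>x. 1 - (cmod (uq x))^2 \<partial>lborel)"
    for uq
    using assms(1,2) that by (intro Emin_less_Emin_zero_mass)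
qed

end
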